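(* In the trilevel setting, let $\Omega:=\{x\in\mathrm{Fix}(W):\langle (I-T)x,y-x\rangle\ge0\ \forall y\in\mathrm{Fix}(W)\}$ be nonempty. Assume $\lim_{k\to\infty}\beta_k/\alpha_k=+\infty$, $\beta_k\to0$, $\alpha_k\to0$, $\sum_k\alpha_k=\infty$, there is $K>0$ with $\limsup_{k}\frac1{\alpha_k}\left|\frac1{\beta_k}-\frac1{\beta_{k-1}}\right|\le K$, $\limsup_{k}\frac{|\beta_k-\beta_{k-1}|+|\alpha_k-\alpha_{k-1}|}{\alpha_k\beta_k}=0$, and that the trilevel iteration sequence $\{x^k\}$ is bounded. Suppose further $(A_1)''$ $\limsup_{k\to\infty}\frac{d(x^{k+1},\mathrm{Fix}(W))}{\alpha_k}<\infty$. Then $\{x^k\}$ converges to the unique $x^*\in\Omega$ satisfying $\langle x^*-S(x^* ),x-x^*\rangle\ge0$ for all $x\in\Omega$.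
   Context: Trilevel setting. Let $f_1,f_2:\mathbb R^n\to\mathbb R$ be convex and continuously differentiable with $L_{f_i}$-Lipschitz gradients, and $g_1,g_2:\mathbb R^n\to(-\infty,+\infty]$ proper, lower semicontinuous and convex; put $\phi_i=f_i+g_i$. Let $\omega:\mathbb R^n\to\mathbb R$ be $\mu$-strongly convex and continuously differentiable with $L_\omega$-Lipschitz gradient. Let $Y^*=\arg\min_{x\in\mathbb R^n}\phi_2(x)$ and $X^*=\arg\min_{x\in Y^*}\phi_1(x)$, both assumed nonempty. For a proper lsc convex $g$, $\mathrm{prox}_g(x)=\arg\min_{u}\{g(u)+\tfrac12\|u-x\|^2\}$. Fix $u\in(0,\tfrac{2}{L_\omega+\mu}]$, $t\in(0,1/L_{f_1}]$, $s\in(0,1/L_{f_2}]$ and define $S(x)=x-u\nabla\omega(x)$, $T(x)=\mathrm{prox}_{tg_1}(x-t\nabla f_1(x))$, $W(x)=\mathrm{prox}_{sg_2}(x-s\nabla f_2(x))$. Then $S$ is a contraction with constant $r=\sqrt{1-\tfrac{2u\mu L_\omega}{\mu+L_\omega}}\in[0,1)$, $T,W$ are nonexpansive, $\mathrm{Fix}(W)=Y^*$. Given $x^0\in\mathbb R^n$ and real sequences $\alpha_k,\beta_k\in(0,1)$, the trilevel iteration sequence is $x^{k+1}=\alpha_kS(x^k)+(1-\alpha_k)\beta_kT(x^k)+(1-\alpha_k)(1-\beta_k)W(x^k)$, $k\ge0$. $I$ is the identity, $d(x,A)=\inf_{a\in A}\|x-a\|$. *)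

theory Defs
  imports "HOL-Analysis.Analysis"
begin

definition proper_fun :: "('a \<Rightarrow> ereal) \<Rightarrow> bool" where
  "proper_fun g \<longleftrightarrow> (\<forall>x. g x \<noteq> -\<infinity>) \<and> (\<exists>x. g x \<noteq> \<infinity>)"

definition lsc_fun :: "('a::topological_space \<Rightarrow> ereal) \<Rightarrow> bool" where
  "lsc_fun g \<longleftrightarrow> (\<forall>c. closed {x. g x \<le> c})"

definition convex_fun :: "('a::real_vector \<Rightarrow> ereal) \<Rightarrow> bool" where
  "convex_fun g \<longleftrightarrow> (\<forall>x y a. 0 \<le> a \<and> a \<le> 1 \<longrightarrow>
     g ((1 - a) *\<^sub>R x + a *\<^sub>R y) \<le> ereal (1 - a) * g x + ereal a * g y)"

definition strongly_convex :: "real \<Rightarrow> ('a::real_normed_vector \<Rightarrow> real) \<Rightarrow> bool" where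
  "strongly_convex \<mu> w \<longleftrightarrow> (\<forall>x y a. 0 \<le> a \<and> a \<le> 1 \<longrightarrow>
     w ((1 - a) *\<^sub>R x + a *\<^sub>R y) \<le> (1 - a) * w x + a * w y
        - \<mu> / 2 * a * (1 - a) * (norm (x - y))\<^sup>2)"

definition is_gradient :: "('a::real_inner \<Rightarrow> real) \<Rightarrow> ('a \<Rightarrow> 'a) \<Rightarrow> bool" where
  "is_gradient f gf \<longleftrightarrow> (\<forall>x. (f has_derivative (\<lambda>h. gf x \<bullet> h)) (at x))"

definition prox :: "('a::real_normed_vector \<Rightarrow> ereal) \<Rightarrow> 'a \<Rightarrow> 'a" where
  "prox g x = (THE p. \<forall>v. g p + ereal ((norm (p - x))\<^sup>2 / 2) \<le> g v + ereal ((norm (v - x))\<^sup>2 / 2))"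

definition fb_step :: "real \<Rightarrow> ('a::real_normed_vector \<Rightarrow> ereal) \<Rightarrow> ('a \<Rightarrow> 'a) \<Rightarrow> 'a \<Rightarrow> 'a" where
  "fb_step c g gf x = prox (\<lambda>v. ereal c * g v) (x - c *\<^sub>R gf x)"

definition Fix :: "('a \<Rightarrow> 'a) \<Rightarrow> 'a set" where
  "Fix F = {x. F x = x}"

end

theory Submission
  imports Defs
begin

text \<open>
  \<open>S\<close> is a contraction because the gradient of a strongly convex function with Lipschitz gradient
  is both strongly monotone and cocoercive (Baillon--Haddad); \<open>T\<close> and \<open>W\<close> are nonexpansive because
  gradient steps of length at most \<open>2/L\<close> are nonexpansive and proximal maps are firmly
  nonexpansive. By Minty's lemma \<open>\<Omega>\<close> is closed and convex, so the variational inequality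
  defined by \<open>I - S\<close> on \<open>\<Omega>\<close> has a unique solution \<open>x\<^sup>*\<close>, the fixed point of \<open>P\<^sub>\<Omega> \<circ> S\<close>.

  For the iterates, the conditions on the steps make Xu's lemma applicable to
  \<open>\<parallel>x\<^sup>k\<^sup>+\<^sup>1 - x\<^sup>k\<parallel> / \<beta>\<^sub>k\<close>, which therefore tends to \<open>0\<close>. Since moreover \<open>\<alpha>\<^sub>k / \<beta>\<^sub>k \<rightarrow> 0\<close> and
  \<open>d(x\<^sup>k\<^sup>+\<^sup>1, Fix W) = O(\<alpha>\<^sub>k)\<close>, every cluster point of the bounded sequence lies in \<open>\<Omega>\<close>, whence
  \<open>limsup \<langle>S x\<^sup>* - x\<^sup>*, x\<^sup>k - x\<^sup>*\<rangle> \<le> 0\<close>. A second application of Xu's lemma, now to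
  \<open>\<parallel>x\<^sup>k - x\<^sup>*\<parallel>\<^sup>2\<close> with contraction factor \<open>1 - \<alpha>\<^sub>k (1 - r)\<close>, gives \<open>x\<^sup>k \<rightarrow> x\<^sup>*\<close>.
\<close>

section \<open>Nonexpansive maps and variational inequalities\<close>

definition nonexpansive :: "('a::real_normed_vector \<Rightarrow> 'a) \<Rightarrow> bool" where
  "nonexpansive T \<longleftrightarrow> (\<forall>a b. norm (T a - T b) \<le> norm (a - b))"

definition contraction :: "real \<Rightarrow> ('a::real_normed_vector \<Rightarrow> 'a) \<Rightarrow> bool" where
  "contraction r S \<longleftrightarrow> 0 \<le> r \<and> r < 1 \<and> (\<forall>a b. norm (S a - S b) \<le> r * norm (a - b))"

definition vi_solutions :: "('a::real_inner \<Rightarrow> 'a) \<Rightarrow> 'a set \<Rightarrow> 'a set" where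
  "vi_solutions A F = {z \<in> F. \<forall>y\<in>F. A z \<bullet> (y - z) \<ge> 0}"

lemma le_of_vanishing_slack:
  fixes X Y Z :: real
  assumes Z: "Z \<ge> 0" and slack: "\<And>a. 0 < a \<Longrightarrow> a \<le> 1 \<Longrightarrow> X \<le> Y + a * Z"
  shows "X \<le> Y"
proof (rule field_le_epsilon)
  fix e :: real assume e: "0 < e"
  define a where "a = min 1 (e / (Z + 1))"
  have a: "0 < a" "a \<le> 1" using e Z by (auto simp: a_def)
  have "a * Z \<le> e / (Z + 1) * Z" using Z by (intro mult_right_mono) (auto simp: a_def)
  also have "\<dots> \<le> e" using e Z by (simp add: field_simps)
  finally show "X \<le> Y + e" using slack[OF a] by linarith
qed

lemma nonexpansiveD: "nonexpansive T \<Longrightarrow> norm (T a - T b) \<le> norm (a - b)"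
  by (simp add: nonexpansive_def)

lemma contractionD:
  fixes S :: "'a::real_normed_vector \<Rightarrow> 'a"
  assumes "contraction r S"
  shows "0 \<le> r" "r < 1" "norm (S a - S b) \<le> r * norm (a - b)"
  using assms by (auto simp: contraction_def)

lemma contraction_imp_nonexpansive:
  fixes S :: "'a::real_normed_vector \<Rightarrow> 'a"
  assumes "contraction r S"
  shows "nonexpansive S"
  unfolding nonexpansive_def
proof (intro allI)
  fix a b :: 'a
  have "r * norm (a - b) \<le> norm (a - b)"
    using contractionD(1,2)[OF assms] by (simp add: mult_left_le_one_le)
  then show "norm (S a - S b) \<le> norm (a - b)"
    using contractionD(3)[OF assms, of a b] by linarith
qed

lemma nonexpansive_continuous_on:
  assumes "nonexpansive T"
  shows "continuous_on A T"
proof -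
  have "1-lipschitz_on A T"
    using assms by (intro lipschitz_onI) (auto simp: dist_norm nonexpansive_def)
  then show ?thesis by (rule lipschitz_on_continuous_on)
qed

lemma nonexpansive_norm_le_affine:
  assumes "nonexpansive T"
  shows "norm (T a) \<le> norm (T 0) + norm a"
  using norm_triangle_sub[of "T a" "T 0"] nonexpansiveD[OF assms, of a 0] by simp

lemma nonexpansive_fixpoint_inner_le:
  fixes W :: "'a::real_inner \<Rightarrow> 'a"
  assumes "nonexpansive W" and "W p = p"
  shows "2 * ((z - p) \<bullet> (W z - z)) + (W z - z) \<bullet> (W z - z) \<le> 0"
proof -
  have "norm ((z - p) + (W z - z)) \<le> norm (z - p)"
    using nonexpansiveD[OF assms(1), of z p] assms(2) by simp
  then have "((z - p) + (W z - z)) \<bullet> ((z - p) + (W z - z)) \<le> (z - p) \<bullet> (z - p)"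
    by (simp only: norm_le)
  moreover have "((z - p) + (W z - z)) \<bullet> ((z - p) + (W z - z))
      = (z - p) \<bullet> (z - p) + 2 * ((z - p) \<bullet> (W z - z)) + (W z - z) \<bullet> (W z - z)"
    by (simp only: inner_add_left inner_add_right inner_commute[of "W z - z" "z - p"])
  ultimately show ?thesis by linarith
qed

lemma nonexpansive_fixpoint_inner_nonneg:
  fixes W :: "'a::real_inner \<Rightarrow> 'a"
  assumes "nonexpansive W" and "W p = p"
  shows "(z - W z) \<bullet> (z - p) \<ge> 0"
proof -
  have "2 * ((z - p) \<bullet> (W z - z)) \<le> 0"
    using nonexpansive_fixpoint_inner_le[OF assms, of z] inner_ge_zero[of "W z - z"] by linarith
  then show ?thesis by (simp add: inner_commute inner_diff_left inner_diff_right)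
qed

lemma closed_Fix_nonexpansive:
  assumes "nonexpansive W"
  shows "closed (Fix W)"
  unfolding Fix_def
  by (intro closed_Collect_eq nonexpansive_continuous_on[OF assms] continuous_on_id)

lemma convex_Fix_nonexpansive:
  fixes W :: "'a::real_inner \<Rightarrow> 'a"
  assumes W: "nonexpansive W"
  shows "convex (Fix W)"
proof (rule convexI)
  fix p q :: 'a and u v :: real
  assume p: "p \<in> Fix W" and q: "q \<in> Fix W" and uv: "0 \<le> u" "0 \<le> v" "u + v = 1"
  define z where "z = u *\<^sub>R p + v *\<^sub>R q"
  define e where "e = W z - z"
  have hp: "2 * ((z - p) \<bullet> e) + e \<bullet> e \<le> 0" and hq: "2 * ((z - q) \<bullet> e) + e \<bullet> e \<le> 0"
    unfolding e_def using p q by (auto intro!: nonexpansive_fixpoint_inner_le[OF W] simp: Fix_def)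
  \<comment> \<open>the weighted average of the two inequalities cancels the linear terms\<close>
  have "u *\<^sub>R (z - p) + v *\<^sub>R (z - q) = (u + v) *\<^sub>R z - z"
    by (simp add: z_def algebra_simps)
  then have "u *\<^sub>R (z - p) + v *\<^sub>R (z - q) = 0"
    using uv by simp
  then have lin: "u * ((z - p) \<bullet> e) + v * ((z - q) \<bullet> e) = 0"
    by (metis inner_add_left inner_scaleR_left inner_zero_left)
  have "u * (2 * ((z - p) \<bullet> e) + e \<bullet> e) + v * (2 * ((z - q) \<bullet> e) + e \<bullet> e) \<le> 0"
    using hp hq uv by (meson add_nonpos_nonpos mult_nonneg_nonpos)
  then have "(u + v) * (e \<bullet> e) \<le> 0"
    using lin by (simp add: algebra_simps)
  then have "e \<bullet> e \<le> 0"
    using uv by simp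
  then have "e = 0" using inner_gt_zero_iff[of e] by linarith
  then show "u *\<^sub>R p + v *\<^sub>R q \<in> Fix W" by (simp add: Fix_def e_def z_def)
qed

lemma nonexpansive_imp_monotone:
  fixes T :: "'a::real_inner \<Rightarrow> 'a"
  assumes "nonexpansive T"
  shows "((a - T a) - (b - T b)) \<bullet> (a - b) \<ge> 0"
proof -
  have "(T a - T b) \<bullet> (a - b) \<le> norm (T a - T b) * norm (a - b)" by (rule norm_cauchy_schwarz)
  also have "\<dots> \<le> norm (a - b) * norm (a - b)"
    using nonexpansiveD[OF assms, of a b] by (simp add: mult_right_mono)
  finally have "(T a - T b) \<bullet> (a - b) \<le> (a - b) \<bullet> (a - b)"
    by (simp add: dot_square_norm power2_eq_square)
  then show ?thesis by (simp add: inner_diff_left)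
qed

lemma vi_solutions_subset: "vi_solutions A F \<subseteq> F"
  by (auto simp: vi_solutions_def)

lemma vi_solutions_Minty:
  fixes T :: "'a::real_inner \<Rightarrow> 'a"
  assumes T: "nonexpansive T" and F: "convex F"
  shows "vi_solutions (\<lambda>z. z - T z) F = {z \<in> F. \<forall>y\<in>F. (y - T y) \<bullet> (y - z) \<ge> 0}"
proof (intro set_eqI iffI)
  fix z assume z: "z \<in> vi_solutions (\<lambda>z. z - T z) F"
  have "(y - T y) \<bullet> (y - z) \<ge> 0" if "y \<in> F" for y
  proof -
    have "((y - T y) - (z - T z)) \<bullet> (y - z) \<ge> 0" by (rule nonexpansive_imp_monotone[OF T])
    moreover have "(z - T z) \<bullet> (y - z) \<ge> 0" using z that by (simp add: vi_solutions_def)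
    ultimately show ?thesis unfolding inner_diff_left by linarith
  qed
  then show "z \<in> {z \<in> F. \<forall>y\<in>F. (y - T y) \<bullet> (y - z) \<ge> 0}"
    using z by (simp add: vi_solutions_def)
next
  fix z assume z: "z \<in> {z \<in> F. \<forall>y\<in>F. (y - T y) \<bullet> (y - z) \<ge> 0}"
  have zF: "z \<in> F" using z by simp
  have "(z - T z) \<bullet> (y - z) \<ge> 0" if y: "y \<in> F" for y
  proof -
    define d where "d = y - z"
    \<comment> \<open>test the Minty inequality at the points \<open>z + \<tau> d\<close> of the segment and let \<open>\<tau> \<rightarrow> 0\<close>\<close>
    have slack: "- ((z - T z) \<bullet> d) \<le> 0 + \<tau> * (2 * (d \<bullet> d))" if t: "0 < \<tau>" "\<tau> \<le> 1" for \<tau>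
    proof -
      define w where "w = z + \<tau> *\<^sub>R d"
      have "w = (1 - \<tau>) *\<^sub>R z + \<tau> *\<^sub>R y" by (simp add: w_def d_def algebra_simps)
      then have "w \<in> F" using convexD_alt[OF F zF y, of \<tau>] t by simp
      then have "(w - T w) \<bullet> (w - z) \<ge> 0" using z by simp
      then have "\<tau> * ((w - T w) \<bullet> d) \<ge> 0" by (simp add: w_def)
      then have a: "(w - T w) \<bullet> d \<ge> 0" using t by (simp add: zero_le_mult_iff)
      have "(w - T w) - (z - T z) = (w - z) - (T w - T z)" by (simp add: algebra_simps)
      then have "norm ((w - T w) - (z - T z)) \<le> norm (w - z) + norm (T w - T z)"
        by (metis norm_triangle_ineq4)
      then have "norm ((w - T w) - (z - T z)) \<le> 2 * norm (w - z)"
        using nonexpansiveD[OF T, of w z] by simp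
      then have "((w - T w) - (z - T z)) \<bullet> d \<le> 2 * norm (w - z) * norm d"
        using norm_cauchy_schwarz[of "(w - T w) - (z - T z)" d] by (meson mult_right_mono norm_ge_zero order.trans)
      also have "2 * norm (w - z) * norm d = \<tau> * (2 * (d \<bullet> d))"
        using t by (simp add: w_def dot_square_norm power2_eq_square)
      finally show ?thesis using a by (simp add: inner_diff_left)
    qed
    have "- ((z - T z) \<bullet> d) \<le> 0"
      using le_of_vanishing_slack[OF _ slack] by simp
    then show ?thesis by (simp add: d_def)
  qed
  then show "z \<in> vi_solutions (\<lambda>z. z - T z) F" using zF by (simp add: vi_solutions_def)
qed

lemma vi_solutions_nonexpansive_eq_Inter_halfspaces:
  fixes T :: "'a::real_inner \<Rightarrow> 'a"
  assumes "nonexpansive T" "convex F"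
  shows "vi_solutions (\<lambda>z. z - T z) F = F \<inter> (\<Inter>y\<in>F. {z. (y - T y) \<bullet> z \<le> (y - T y) \<bullet> y})"
  unfolding vi_solutions_Minty[OF assms] by (auto simp: inner_diff_right)

lemma closed_vi_solutions_nonexpansive:
  fixes T :: "'a::real_inner \<Rightarrow> 'a"
  assumes "nonexpansive T" "closed F" "convex F"
  shows "closed (vi_solutions (\<lambda>z. z - T z) F)"
  unfolding vi_solutions_nonexpansive_eq_Inter_halfspaces[OF assms(1,3)]
  by (intro closed_Int closed_INT ballI closed_halfspace_le assms(2))

lemma convex_vi_solutions_nonexpansive:
  fixes T :: "'a::real_inner \<Rightarrow> 'a"
  assumes "nonexpansive T" "convex F"
  shows "convex (vi_solutions (\<lambda>z. z - T z) F)"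
  unfolding vi_solutions_nonexpansive_eq_Inter_halfspaces[OF assms]
  by (intro convex_Int convex_INT ballI convex_halfspace_le assms(2))

lemma vi_solutions_contraction_unique:
  fixes S :: "'a::real_inner \<Rightarrow> 'a"
  assumes S: "contraction r S"
    and w: "w \<in> vi_solutions (\<lambda>z. z - S z) F" and w': "w' \<in> vi_solutions (\<lambda>z. z - S z) F"
  shows "w = w'"
proof -
  have "(w - S w) \<bullet> (w' - w) \<ge> 0" "(w' - S w') \<bullet> (w - w') \<ge> 0"
    using w w' by (auto simp: vi_solutions_def)
  moreover have "(w - S w) \<bullet> (w' - w) + (w' - S w') \<bullet> (w - w')
      = (S w - S w') \<bullet> (w - w') - (w - w') \<bullet> (w - w')"
    by (simp add: inner_diff_left inner_diff_right inner_commute)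
  ultimately have "(w - w') \<bullet> (w - w') \<le> (S w - S w') \<bullet> (w - w')"
    by linarith
  also have "\<dots> \<le> norm (S w - S w') * norm (w - w')" by (rule norm_cauchy_schwarz)
  also have "\<dots> \<le> r * norm (w - w') * norm (w - w')"
    using contractionD(3)[OF S, of w w'] by (simp add: mult_right_mono)
  finally have "norm (w - w') * norm (w - w') \<le> r * (norm (w - w') * norm (w - w'))"
    by (simp add: dot_square_norm power2_eq_square mult.assoc)
  then have "(1 - r) * (norm (w - w') * norm (w - w')) \<le> 0"
    by (simp add: algebra_simps)
  then have "norm (w - w') * norm (w - w') \<le> 0"
    using contractionD(2)[OF S] by (simp add: mult_le_0_iff)
  then show ?thesis
    using mult_nonneg_nonneg[OF norm_ge_zero norm_ge_zero, of "w - w'" "w - w'"] by simp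
qed

lemma vi_solutions_contraction_singleton:
  fixes S :: "'a::euclidean_space \<Rightarrow> 'a"
  assumes S: "contraction r S" and F: "closed F" "convex F" "F \<noteq> {}"
  shows "\<exists>xs. vi_solutions (\<lambda>z. z - S z) F = {xs}"
proof -
  \<comment> \<open>a solution is a fixed point of the contraction \<open>P\<^sub>F \<circ> S\<close>\<close>
  have "\<forall>a b. dist (closest_point F (S a)) (closest_point F (S b)) \<le> r * dist a b"
  proof (intro allI)
    fix a b
    have "dist (closest_point F (S a)) (closest_point F (S b)) \<le> dist (S a) (S b)"
      by (rule closest_point_lipschitz[OF F(2,1,3)])
    also have "\<dots> \<le> r * dist a b"
      using contractionD(3)[OF S, of a b] by (simp add: dist_norm)
    finally show "dist (closest_point F (S a)) (closest_point F (S b)) \<le> r * dist a b" .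
  qed
  from ex1_implies_ex[OF banach_fix_type[OF contractionD(1,2)[OF S] this]]
  obtain xs where xs: "closest_point F (S xs) = xs" ..
  have "closest_point F (S xs) \<in> F" by (rule closest_point_in_set[OF F(1,3)])
  then have "xs \<in> F" by (simp only: xs)
  moreover have "(xs - S xs) \<bullet> (z - xs) \<ge> 0" if "z \<in> F" for z
  proof -
    have "(S xs - xs) \<bullet> (z - xs) \<le> 0"
      using closest_point_dot[OF F(2,1) that, of "S xs"] by (simp only: xs)
    then show ?thesis by (metis inner_minus_left minus_diff_eq neg_0_le_iff_le)
  qed
  ultimately have sol: "xs \<in> vi_solutions (\<lambda>z. z - S z) F" by (simp add: vi_solutions_def)
  have "vi_solutions (\<lambda>z. z - S z) F = {xs}"
  proof
    show "vi_solutions (\<lambda>z. z - S z) F \<subseteq> {xs}"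
      using vi_solutions_contraction_unique[OF S _ sol] by blast
  qed (simp add: sol)
  then show ?thesis ..
qed

section \<open>Smooth convex functions\<close>

lemma has_real_derivative_along_line:
  fixes f :: "'a::real_inner \<Rightarrow> real"
  assumes "(f has_derivative (\<lambda>h. g \<bullet> h)) (at (x + t *\<^sub>R v))"
  shows "((\<lambda>a. f (x + a *\<^sub>R v)) has_real_derivative (g \<bullet> v)) (at t)"
proof -
  have "((\<lambda>a. x + a *\<^sub>R v) has_derivative (\<lambda>a. a *\<^sub>R v)) (at t)"
    by (auto intro!: derivative_eq_intros)
  from has_derivative_compose[OF this assms]
  have "((\<lambda>a. f (x + a *\<^sub>R v)) has_derivative (\<lambda>a. g \<bullet> (a *\<^sub>R v))) (at t)" .
  moreover have "(\<lambda>a. g \<bullet> (a *\<^sub>R v)) = (*) (g \<bullet> v)" by (auto simp: fun_eq_iff mult.commute)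
  ultimately show ?thesis unfolding has_field_derivative_def by simp
qed

lemma inner_gradient_le_of_quotient_le:
  fixes f :: "'a::real_inner \<Rightarrow> real"
  assumes "(f has_derivative (\<lambda>h. g \<bullet> h)) (at x)"
    and quotient_le: "\<And>a. 0 < a \<Longrightarrow> a \<le> 1 \<Longrightarrow> (f (x + a *\<^sub>R v) - f x) / a \<le> K + a * K'"
  shows "g \<bullet> v \<le> K"
proof -
  have "((\<lambda>a. f (x + a *\<^sub>R v)) has_real_derivative (g \<bullet> v)) (at 0)"
    using has_real_derivative_along_line[of f g x 0 v] assms(1) by simp
  then have "((\<lambda>a. (f (x + a *\<^sub>R v) - f x) / a) \<longlongrightarrow> g \<bullet> v) (at_right 0)"
    unfolding DERIV_def by (simp add: filterlim_at_split)
  moreover have "((\<lambda>a. K + a * K') \<longlongrightarrow> K + 0 * K') (at_right 0)"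
    by (intro tendsto_intros)
  moreover have "eventually (\<lambda>a. (f (x + a *\<^sub>R v) - f x) / a \<le> K + a * K') (at_right 0)"
    by (rule eventually_mono[OF eventually_at_right_real[of 0 1]]) (auto intro: quotient_le)
  ultimately have "g \<bullet> v \<le> K + 0 * K'" by (intro tendsto_le[of "at_right 0"]) auto
  then show ?thesis by simp
qed

lemma convex_on_gradient_ineq:
  fixes f :: "'a::real_inner \<Rightarrow> real"
  assumes f: "convex_on UNIV f" and gf: "is_gradient f gf"
  shows "f x + gf x \<bullet> (y - x) \<le> f y"
proof -
  have "gf x \<bullet> (y - x) \<le> f y - f x"
  proof (rule inner_gradient_le_of_quotient_le[where K' = 0])
    show "(f has_derivative (\<lambda>h. gf x \<bullet> h)) (at x)" using gf by (simp add: is_gradient_def)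
    fix a :: real assume a: "0 < a" "a \<le> 1"
    have "f ((1 - a) *\<^sub>R x + a *\<^sub>R y) \<le> (1 - a) * f x + a * f y"
      using f a by (intro convex_onD) auto
    moreover have "x + a *\<^sub>R (y - x) = (1 - a) *\<^sub>R x + a *\<^sub>R y" by (simp add: algebra_simps)
    ultimately have "f (x + a *\<^sub>R (y - x)) - f x \<le> a * (f y - f x)" by (simp add: algebra_simps)
    then show "(f (x + a *\<^sub>R (y - x)) - f x) / a \<le> f y - f x + a * 0"
      using a by (simp add: divide_le_eq mult.commute)
  qed
  then show ?thesis by simp
qed

lemma descent_lemma:
  fixes f :: "'a::real_inner \<Rightarrow> real"
  assumes gf: "is_gradient f gf" and L: "L-lipschitz_on UNIV gf"
  shows "f y \<le> f x + gf x \<bullet> (y - x) + L / 2 * (norm (y - x))\<^sup>2"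
proof -
  define d where "d = y - x"
  define \<psi> where "\<psi> t = f (x + t *\<^sub>R d) - t * (gf x \<bullet> d) - L / 2 * t\<^sup>2 * (norm d)\<^sup>2" for t
  have "\<psi> 1 \<le> \<psi> 0"
  proof (rule DERIV_nonpos_imp_nonincreasing[of 0 1 \<psi>])
    fix t :: real assume t: "0 \<le> t" "t \<le> 1"
    have "((\<lambda>a. f (x + a *\<^sub>R d)) has_real_derivative (gf (x + t *\<^sub>R d) \<bullet> d)) (at t)"
      using has_real_derivative_along_line[of f "gf (x + t *\<^sub>R d)" x t d] gf
      by (simp add: is_gradient_def)
    then have "(\<psi> has_real_derivative (gf (x + t *\<^sub>R d) \<bullet> d - gf x \<bullet> d - L / 2 * (2 * t) * (norm d)\<^sup>2)) (at t)"
      unfolding \<psi>_def[abs_def] by (auto intro!: derivative_eq_intros simp: power2_eq_square)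
    moreover have "gf (x + t *\<^sub>R d) \<bullet> d - gf x \<bullet> d \<le> L / 2 * (2 * t) * (norm d)\<^sup>2"
    proof -
      have "gf (x + t *\<^sub>R d) \<bullet> d - gf x \<bullet> d \<le> norm (gf (x + t *\<^sub>R d) - gf x) * norm d"
        using norm_cauchy_schwarz[of "gf (x + t *\<^sub>R d) - gf x" d] by (simp only: inner_diff_left)
      also have "\<dots> \<le> L * norm (t *\<^sub>R d) * norm d"
        using lipschitz_onD[OF L, of "x + t *\<^sub>R d" x] by (simp add: dist_norm mult_right_mono)
      also have "\<dots> = L / 2 * (2 * t) * (norm d)\<^sup>2" using t by (simp add: power2_eq_square)
      finally show ?thesis .
    qed
    ultimately show "\<exists>y. (\<psi> has_real_derivative y) (at t) \<and> y \<le> 0" by force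
  qed simp
  then show ?thesis by (simp add: \<psi>_def d_def)
qed

lemma convex_smooth_lower_bound:
  fixes f :: "'a::real_inner \<Rightarrow> real"
  assumes f: "convex_on UNIV f" and gf: "is_gradient f gf" and L: "L-lipschitz_on UNIV gf" "L > 0"
  shows "f x + gf x \<bullet> (y - x) + 1 / (2 * L) * (norm (gf y - gf x))\<^sup>2 \<le> f y"
proof -
  define v where "v = gf y - gf x"
  \<comment> \<open>compare \<open>f\<close> at the point \<open>z\<close> from below (tangent at \<open>x\<close>) and from above (descent lemma at \<open>y\<close>)\<close>
  define z where "z = y - (1 / L) *\<^sub>R v"
  have "f x + gf x \<bullet> (z - x) \<le> f z" by (rule convex_on_gradient_ineq[OF f gf])
  moreover have "f z \<le> f y + gf y \<bullet> (z - y) + L / 2 * (norm (z - y))\<^sup>2"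
    by (rule descent_lemma[OF gf L(1)])
  moreover have "gf y \<bullet> (z - y) - gf x \<bullet> (z - y) = - (1 / L) * (norm v)\<^sup>2"
  proof -
    have "gf y \<bullet> (z - y) - gf x \<bullet> (z - y) = v \<bullet> (z - y)" by (simp add: v_def inner_diff_left)
    also have "\<dots> = - (1 / L) * (norm v)\<^sup>2" by (simp add: z_def power2_norm_eq_inner)
    finally show ?thesis .
  qed
  moreover have "L / 2 * (norm (z - y))\<^sup>2 = 1 / (2 * L) * (norm v)\<^sup>2"
    using L(2) by (simp add: z_def power2_eq_square field_simps)
  moreover have "gf x \<bullet> (z - x) = gf x \<bullet> (z - y) + gf x \<bullet> (y - x)" by (simp add: inner_diff_right)
  ultimately show ?thesis by (simp add: v_def)
qed

lemma gradient_cocoercive: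
  fixes f :: "'a::real_inner \<Rightarrow> real"
  assumes "convex_on UNIV f" "is_gradient f gf" "L-lipschitz_on UNIV gf" "L > 0"
  shows "1 / L * (norm (gf x - gf y))\<^sup>2 \<le> (gf x - gf y) \<bullet> (x - y)"
proof -
  have "f x + gf x \<bullet> (y - x) + 1 / (2 * L) * (norm (gf x - gf y))\<^sup>2 \<le> f y"
    using convex_smooth_lower_bound[OF assms, of x y] by (simp add: norm_minus_commute)
  moreover have "f y + gf y \<bullet> (x - y) + 1 / (2 * L) * (norm (gf x - gf y))\<^sup>2 \<le> f x"
    by (rule convex_smooth_lower_bound[OF assms])
  moreover have "gf x \<bullet> (y - x) + gf y \<bullet> (x - y) = - ((gf x - gf y) \<bullet> (x - y))"
    by (simp add: inner_diff_left inner_diff_right)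
  ultimately show ?thesis by linarith
qed

lemma norm_diff_scaleR_sq:
  fixes d e :: "'a::real_inner"
  shows "(norm (d - t *\<^sub>R e))\<^sup>2 = (norm d)\<^sup>2 - 2 * t * (e \<bullet> d) + t\<^sup>2 * (norm e)\<^sup>2"
  unfolding power2_norm_eq_inner
  by (simp add: inner_diff_left inner_diff_right inner_commute power2_eq_square algebra_simps)

lemma gradient_step_nonexpansive:
  fixes f :: "'a::real_inner \<Rightarrow> real"
  assumes "convex_on UNIV f" "is_gradient f gf" "L-lipschitz_on UNIV gf" "L > 0"
    and t: "0 \<le> t" "t \<le> 2 / L"
  shows "nonexpansive (\<lambda>a. a - t *\<^sub>R gf a)"
  unfolding nonexpansive_def
proof (intro allI)
  fix a b :: 'a
  define d e where "d = a - b" "e = gf a - gf b"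
  have "2 * t * (1 / L * (norm e)\<^sup>2) \<le> 2 * t * (e \<bullet> d)"
    using mult_left_mono[OF gradient_cocoercive[OF assms(1-4), of a b], of "2 * t"] t
    by (simp add: d_e_def)
  then have "(norm (d - t *\<^sub>R e))\<^sup>2 \<le> (norm d)\<^sup>2 - t * (2 / L - t) * (norm e)\<^sup>2"
    unfolding norm_diff_scaleR_sq by (simp add: algebra_simps power2_eq_square)
  also have "\<dots> \<le> (norm d)\<^sup>2" using t by simp
  finally have "norm (d - t *\<^sub>R e) \<le> norm d" by (simp add: power2_le_iff_abs_le)
  then show "norm ((a - t *\<^sub>R gf a) - (b - t *\<^sub>R gf b)) \<le> norm (a - b)"
    by (simp add: d_e_def algebra_simps)
qed

lemma strongly_convex_imp_convex_on:
  assumes "strongly_convex \<mu> w" "\<mu> \<ge> 0"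
  shows "convex_on UNIV w"
proof (rule convex_onI)
  fix t :: real and x y assume t: "0 < t" "t < 1"
  have "w ((1 - t) *\<^sub>R x + t *\<^sub>R y) \<le> (1 - t) * w x + t * w y - \<mu> / 2 * t * (1 - t) * (norm (x - y))\<^sup>2"
    using assms(1) t unfolding strongly_convex_def by auto
  moreover have "\<mu> / 2 * t * (1 - t) * (norm (x - y))\<^sup>2 \<ge> 0" using t assms(2) by simp
  ultimately show "w ((1 - t) *\<^sub>R x + t *\<^sub>R y) \<le> (1 - t) * w x + t * w y" by linarith
qed simp

lemma strongly_convex_gradient_ineq:
  fixes w :: "'a::real_inner \<Rightarrow> real"
  assumes w: "strongly_convex \<mu> w" and gw: "is_gradient w gw"
  shows "w x + gw x \<bullet> (y - x) + \<mu> / 2 * (norm (y - x))\<^sup>2 \<le> w y"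
proof -
  define N where "N = (norm (y - x))\<^sup>2"
  have "gw x \<bullet> (y - x) \<le> w y - w x - \<mu> / 2 * N"
  proof (rule inner_gradient_le_of_quotient_le[where K' = "\<mu> / 2 * N"])
    show "(w has_derivative (\<lambda>h. gw x \<bullet> h)) (at x)" using gw by (simp add: is_gradient_def)
    fix a :: real assume a: "0 < a" "a \<le> 1"
    have "x + a *\<^sub>R (y - x) = (1 - a) *\<^sub>R x + a *\<^sub>R y" by (simp add: algebra_simps)
    then have "w (x + a *\<^sub>R (y - x)) \<le> (1 - a) * w x + a * w y - \<mu> / 2 * a * (1 - a) * N"
      using w a unfolding strongly_convex_def N_def by (auto simp: norm_minus_commute)
    also have "\<dots> = w x + a * (w y - w x - \<mu> / 2 * N + a * (\<mu> / 2 * N))"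
      by (simp add: field_simps)
    finally show "(w (x + a *\<^sub>R (y - x)) - w x) / a \<le> w y - w x - \<mu> / 2 * N + a * (\<mu> / 2 * N)"
      using a by (simp add: divide_le_eq mult.commute)
  qed
  then show ?thesis by (simp add: N_def)
qed

lemma strongly_convex_gradient_monotone:
  fixes w :: "'a::real_inner \<Rightarrow> real"
  assumes "strongly_convex \<mu> w" "is_gradient w gw"
  shows "\<mu> * (norm (x - y))\<^sup>2 \<le> (gw x - gw y) \<bullet> (x - y)"
proof -
  have "w x + gw x \<bullet> (y - x) + \<mu> / 2 * (norm (x - y))\<^sup>2 \<le> w y"
    using strongly_convex_gradient_ineq[OF assms, of x y] by (simp add: norm_minus_commute)
  moreover have "w y + gw y \<bullet> (x - y) + \<mu> / 2 * (norm (x - y))\<^sup>2 \<le> w x"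
    by (rule strongly_convex_gradient_ineq[OF assms])
  moreover have "gw x \<bullet> (y - x) + gw y \<bullet> (x - y) = - ((gw x - gw y) \<bullet> (x - y))"
    by (simp add: inner_diff_left inner_diff_right)
  ultimately show ?thesis by linarith
qed

lemma gradient_step_contraction:
  fixes w :: "'a::real_inner \<Rightarrow> real"
  assumes w: "strongly_convex \<mu> w" "\<mu> > 0" and gw: "is_gradient w gw"
    and L: "L-lipschitz_on UNIV gw" "L > 0" and u: "0 < u" "u \<le> 2 / (L + \<mu>)"
  shows "\<exists>r. contraction r (\<lambda>a. a - u *\<^sub>R gw a)"
proof -
  have convex: "convex_on UNIV w" using strongly_convex_imp_convex_on[OF w(1)] w(2) by simp
  \<comment> \<open>a convex combination of cocoercivity (weight \<open>\<theta>\<close>) and strong monotonicity cancels the \<open>\<parallel>\<nabla>w a - \<nabla>w b\<parallel>\<^sup>2\<close> term\<close>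
  define \<theta> where "\<theta> = u * L / 2"
  have "u * L \<le> 2 / (L + \<mu>) * L" using u L by (intro mult_right_mono) auto
  also have "\<dots> < 2" using L w by (simp add: divide_less_eq)
  finally have \<theta>: "0 < \<theta>" "\<theta> < 1" using u L by (auto simp: \<theta>_def)
  define q where "q = 1 - 2 * u * (1 - \<theta>) * \<mu>"
  have "0 < 2 * u * (1 - \<theta>) * \<mu>" using u \<theta> w by simp
  then have "max 0 q < 1" by (simp add: q_def)
  define r where "r = sqrt (max 0 q)"
  have r: "0 \<le> r" "r < 1" using \<open>max 0 q < 1\<close> by (auto simp: r_def)
  have "norm ((a - u *\<^sub>R gw a) - (b - u *\<^sub>R gw b)) \<le> r * norm (a - b)" for a b
  proof -
    define d e where "d = a - b" "e = gw a - gw b"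
    have "\<theta> * (1 / L * (norm e)\<^sup>2) + (1 - \<theta>) * (\<mu> * (norm d)\<^sup>2) \<le> \<theta> * (e \<bullet> d) + (1 - \<theta>) * (e \<bullet> d)"
      using gradient_cocoercive[OF convex gw L, of a b] strongly_convex_gradient_monotone[OF w(1) gw, of a b] \<theta>
      by (intro add_mono mult_left_mono) (auto simp: d_e_def)
    also have "\<dots> = e \<bullet> d" by (simp add: algebra_simps)
    finally have "2 * u * (\<theta> * (1 / L * (norm e)\<^sup>2) + (1 - \<theta>) * (\<mu> * (norm d)\<^sup>2)) \<le> 2 * u * (e \<bullet> d)"
      using u by (intro mult_left_mono) auto
    moreover have "2 * u * (\<theta> * (1 / L * (norm e)\<^sup>2)) = u\<^sup>2 * (norm e)\<^sup>2"
      using L by (simp add: \<theta>_def power2_eq_square)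
    ultimately have "(norm (d - u *\<^sub>R e))\<^sup>2 \<le> q * (norm d)\<^sup>2"
      unfolding norm_diff_scaleR_sq q_def by (simp add: algebra_simps)
    also have "\<dots> \<le> (r * norm d)\<^sup>2" by (simp add: r_def power_mult_distrib mult_right_mono)
    finally have "norm (d - u *\<^sub>R e) \<le> r * norm d"
      by (rule power2_le_imp_le) (use r in auto)
    then show ?thesis by (simp add: d_e_def algebra_simps)
  qed
  then show ?thesis using r unfolding contraction_def by blast
qed

section \<open>Proximal maps\<close>

lemma lsc_fun_limit_le:
  assumes g: "lsc_fun g" and y: "y \<longlonglongrightarrow> p" and b: "b \<longlonglongrightarrow> B"
    and le: "eventually (\<lambda>n. g (y n) \<le> ereal (b n)) sequentially"
  shows "g p \<le> ereal B"
proof (rule ereal_le_epsilon2)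
  fix \<epsilon> :: real assume "0 < \<epsilon>"
  then have "eventually (\<lambda>n. b n < B + \<epsilon>) sequentially"
    using order_tendstoD(2)[OF b, of "B + \<epsilon>"] by simp
  with le have ev: "eventually (\<lambda>n. y n \<in> {x. g x \<le> ereal (B + \<epsilon>)}) sequentially"
    by eventually_elim (auto intro: order.trans)
  have "closed {x. g x \<le> ereal (B + \<epsilon>)}" using g by (simp add: lsc_fun_def)
  from Lim_in_closed_set[OF this ev _ y] have "p \<in> {x. g x \<le> ereal (B + \<epsilon>)}" by simp
  then have "g p \<le> ereal (B + \<epsilon>)" by simp
  then show "g p \<le> ereal B + ereal \<epsilon>" by simp
qed

lemma lsc_fun_bounded_below_on_compact:
  fixes g :: "'a::metric_space \<Rightarrow> ereal"
  assumes g: "lsc_fun g" "\<forall>x. g x \<noteq> -\<infinity>" and K: "compact K"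
  shows "\<exists>m::real. \<forall>x\<in>K. ereal m \<le> g x"
proof (rule ccontr)
  assume "\<not> ?thesis"
  then have "\<forall>n::nat. \<exists>x\<in>K. g x < ereal (- real n)" by (meson not_le)
  then obtain y where y: "\<And>n. y n \<in> K" "\<And>n. g (y n) < ereal (- real n)" by metis
  obtain l \<sigma> where l: "l \<in> K" "strict_mono (\<sigma> :: nat \<Rightarrow> nat)" "(y \<circ> \<sigma>) \<longlonglongrightarrow> l"
    using seq_compactE[OF compact_imp_seq_compact[OF K], of y] y(1) by blast
  have "g l \<le> ereal (- real m)" for m
  proof (rule lsc_fun_limit_le[OF g(1) l(3) tendsto_const])
    show "eventually (\<lambda>n. g ((y \<circ> \<sigma>) n) \<le> ereal (- real m)) sequentially"
      unfolding eventually_sequentially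
    proof (intro exI allI impI)
      fix n assume "m \<le> n"
      then have "m \<le> \<sigma> n" using seq_suble[OF l(2), of n] by linarith
      then show "g ((y \<circ> \<sigma>) n) \<le> ereal (- real m)"
        using y(2)[of "\<sigma> n"] by (simp add: order.trans[OF less_imp_le])
    qed
  qed
  note below = this
  show False
  proof (cases "g l")
    case (real v)
    obtain m :: nat where "real m > - v" using reals_Archimedean2 by blast
    with below[of m] real show False by simp
  qed (use below[of 0] g(2) in auto)
qed

lemma convex_lsc_affine_minorant:
  fixes g :: "'a::euclidean_space \<Rightarrow> ereal"
  assumes lsc: "lsc_fun g" and not_minf: "\<forall>x. g x \<noteq> -\<infinity>" and cvx: "convex_fun g"
    and g0: "g v0 = ereal g0"
  shows "\<exists>D\<ge>0. \<forall>v. ereal (g0 - D * (1 + norm (v - v0))) \<le> g v"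
proof -
  obtain m where m: "\<forall>x\<in>cball v0 1. ereal m \<le> g x"
    using lsc_fun_bounded_below_on_compact[OF lsc not_minf compact_cball] by blast
  define m' where "m' = min m g0"
  define D where "D = g0 - m'"
  have D: "D \<ge> 0" by (simp add: D_def m'_def)
  have m': "ereal m' \<le> g x" if "x \<in> cball v0 1" for x
  proof -
    have "ereal m' \<le> ereal m" by (simp add: m'_def)
    also have "\<dots> \<le> g x" using m that by blast
    finally show ?thesis .
  qed
  have "ereal (g0 - D * (1 + norm (v - v0))) \<le> g v" for v
  proof (cases "norm (v - v0) \<le> 1")
    case True
    then have "ereal m' \<le> g v" using m' by (simp add: dist_norm norm_minus_commute)
    moreover have "g0 - D * (1 + norm (v - v0)) \<le> m'"
      using D by (simp add: D_def algebra_simps mult_right_mono)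
    ultimately show ?thesis by (meson ereal_less_eq(3) order.trans)
  next
    case False
    \<comment> \<open>convexity along the segment from \<open>v0\<close> to \<open>v\<close>, through the point \<open>w\<close> on the unit sphere\<close>
    define R where "R = norm (v - v0)"
    have R: "R > 1" using False by (simp add: R_def)
    define w where "w = (1 - 1 / R) *\<^sub>R v0 + (1 / R) *\<^sub>R v"
    have "w - v0 = (1 / R) *\<^sub>R (v - v0)" by (simp add: w_def algebra_simps)
    then have "norm (w - v0) = 1" using R by (auto simp: R_def)
    then have mw: "ereal m' \<le> g w" using m' by (simp add: dist_norm norm_minus_commute)
    have cw: "g w \<le> ereal (1 - 1 / R) * g v0 + ereal (1 / R) * g v"
      unfolding w_def using cvx R unfolding convex_fun_def by auto
    show ?thesis
    proof (cases "g v")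
      case (real V)
      have "ereal m' \<le> ereal ((1 - 1 / R) * g0 + (1 / R) * V)"
        using order.trans[OF mw cw] g0 real by simp
      then have "R * m' \<le> R * ((1 - 1 / R) * g0 + (1 / R) * V)" using R by simp
      also have "\<dots> = (R - 1) * g0 + V" using R by (simp add: field_simps)
      finally have "g0 - R * D \<le> V" by (simp add: D_def algebra_simps)
      moreover have "g0 - D * (1 + R) \<le> g0 - R * D" using D by (simp add: algebra_simps)
      ultimately show ?thesis using real by (simp add: R_def)
    qed (use not_minf in auto)
  qed
  then show ?thesis using D by blast
qed

lemma prox_objective_minorant:
  fixes g :: "'a::euclidean_space \<Rightarrow> ereal"
  assumes lsc: "lsc_fun g" and proper: "proper_fun g" and cvx: "convex_fun g" and c: "c > 0"
  obtains a K where "a \<ge> 0"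
    "\<And>v. ereal ((norm (v - z))\<^sup>2 / 2 - a * norm (v - z) - K)
      \<le> ereal c * g v + ereal ((norm (v - z))\<^sup>2 / 2)"
proof -
  have not_minf: "\<forall>x. g x \<noteq> -\<infinity>" using proper by (simp add: proper_fun_def)
  obtain v0 where "g v0 \<noteq> \<infinity>" using proper by (auto simp: proper_fun_def)
  then obtain g0 where g0: "g v0 = ereal g0" using not_minf by (cases "g v0") auto
  obtain D where D: "D \<ge> 0" "\<And>v. ereal (g0 - D * (1 + norm (v - v0))) \<le> g v"
    using convex_lsc_affine_minorant[OF lsc not_minf cvx g0] by blast
  define K where "K = c * D * (1 + norm (z - v0)) - c * g0"
  have "ereal ((norm (v - z))\<^sup>2 / 2 - c * D * norm (v - z) - K)
      \<le> ereal c * g v + ereal ((norm (v - z))\<^sup>2 / 2)" for v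
  proof -
    have "c * D * norm (v - v0) \<le> c * D * (norm (v - z) + norm (z - v0))"
      using norm_triangle_ineq[of "v - z" "z - v0"] c D by (intro mult_left_mono) auto
    then have "(norm (v - z))\<^sup>2 / 2 - c * D * norm (v - z) - K
        \<le> c * (g0 - D * (1 + norm (v - v0))) + (norm (v - z))\<^sup>2 / 2"
      by (simp add: K_def algebra_simps)
    then have "ereal ((norm (v - z))\<^sup>2 / 2 - c * D * norm (v - z) - K)
        \<le> ereal c * ereal (g0 - D * (1 + norm (v - v0))) + ereal ((norm (v - z))\<^sup>2 / 2)"
      by simp
    also have "\<dots> \<le> ereal c * g v + ereal ((norm (v - z))\<^sup>2 / 2)"
      using D(2)[of v] c by (intro add_right_mono ereal_mult_left_mono) auto
    finally show ?thesis .
  qed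
  then show thesis using that[of "c * D" K] c D by simp
qed

lemma quadratic_sublevel_bound:
  fixes t a K B :: real
  assumes "0 \<le> t" "0 \<le> a" "t\<^sup>2 / 2 - a * t - K \<le> B"
  shows "t \<le> max 1 (2 * (\<bar>K + B\<bar> + a))"
proof (cases "t \<le> 1")
  case False
  then have "\<bar>K + B\<bar> \<le> \<bar>K + B\<bar> * t" by (simp add: mult_le_cancel_left1)
  then have "t * t \<le> (2 * (\<bar>K + B\<bar> + a)) * t"
    using assms(3) abs_ge_self[of "K + B"] by (simp add: power2_eq_square algebra_simps)
  then show ?thesis using False by simp
qed simp

lemma prox_objective_INF_finite:
  fixes g :: "'a::euclidean_space \<Rightarrow> ereal"
  assumes lsc: "lsc_fun g" and proper: "proper_fun g" and cvx: "convex_fun g" and c: "c > 0"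
  obtains m where "(INF v. ereal c * g v + ereal ((norm (v - z))\<^sup>2 / 2)) = ereal m"
proof -
  define h where "h v = ereal c * g v + ereal ((norm (v - z))\<^sup>2 / 2)" for v
  obtain a K where minor: "\<And>v. ereal ((norm (v - z))\<^sup>2 / 2 - a * norm (v - z) - K) \<le> h v"
    using prox_objective_minorant[OF lsc proper cvx c, of z] unfolding h_def by blast
  have "ereal (- (a\<^sup>2 / 2) - K) \<le> h v" for v
  proof -
    have "- (a\<^sup>2 / 2) \<le> (norm (v - z))\<^sup>2 / 2 - a * norm (v - z)"
      using sum_squares_ge_zero[of "norm (v - z) - a" 0] by (simp add: power2_eq_square algebra_simps)
    then show ?thesis using minor[of v] by (simp add: order.trans[rotated])
  qed
  then have "ereal (- (a\<^sup>2 / 2) - K) \<le> (INF v. h v)" by (rule INF_greatest)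
  moreover obtain v0 where "g v0 \<noteq> \<infinity>" using proper by (auto simp: proper_fun_def)
  then have "h v0 \<noteq> \<infinity>" using proper c by (cases "g v0") (auto simp: h_def proper_fun_def)
  moreover have "(INF v. h v) \<le> h v0" by (rule INF_lower) simp
  ultimately obtain m where "(INF v. h v) = ereal m" by (cases "INF v. h v") auto
  then show thesis using that by (simp add: h_def)
qed

lemma prox_objective_limit_le:
  fixes g :: "'a::real_normed_vector \<Rightarrow> ereal"
  assumes lsc: "lsc_fun g" and not_minf: "\<forall>x. g x \<noteq> -\<infinity>" and c: "c > 0"
    and y: "y \<longlonglongrightarrow> p" and b: "b \<longlonglongrightarrow> B"
    and le: "\<And>n. ereal c * g (y n) + ereal ((norm (y n - z))\<^sup>2 / 2) \<le> ereal (b n)"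
  shows "ereal c * g p + ereal ((norm (p - z))\<^sup>2 / 2) \<le> ereal B"
proof -
  define N where "N v = (norm (v - z))\<^sup>2 / 2" for v
  have "g p \<le> ereal ((B - N p) / c)"
  proof (rule lsc_fun_limit_le[OF lsc y])
    have "(\<lambda>n. N (y n)) \<longlonglongrightarrow> N p" unfolding N_def by (intro tendsto_intros y) simp
    then show "(\<lambda>n. (b n - N (y n)) / c) \<longlonglongrightarrow> (B - N p) / c"
      using c by (intro tendsto_intros b) auto
    show "eventually (\<lambda>n. g (y n) \<le> ereal ((b n - N (y n)) / c)) sequentially"
    proof (intro always_eventually allI)
      fix n
      show "g (y n) \<le> ereal ((b n - N (y n)) / c)"
        using le[of n] not_minf c
        by (cases "g (y n)") (auto simp: N_def pos_le_divide_eq algebra_simps)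
    qed
  qed
  then show ?thesis
    using c not_minf by (cases "g p") (auto simp: N_def pos_le_divide_eq algebra_simps)
qed

lemma prox_objective_has_min:
  fixes g :: "'a::euclidean_space \<Rightarrow> ereal"
  assumes lsc: "lsc_fun g" and proper: "proper_fun g" and cvx: "convex_fun g" and c: "c > 0"
  shows "\<exists>p. \<forall>v. ereal c * g p + ereal ((norm (p - z))\<^sup>2 / 2) \<le> ereal c * g v + ereal ((norm (v - z))\<^sup>2 / 2)"
proof -
  define h where "h v = ereal c * g v + ereal ((norm (v - z))\<^sup>2 / 2)" for v
  obtain a K where a: "a \<ge> 0" and minor: "\<And>v. ereal ((norm (v - z))\<^sup>2 / 2 - a * norm (v - z) - K) \<le> h v"
    using prox_objective_minorant[OF lsc proper cvx c, of z] unfolding h_def by blast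
  obtain m where m: "(INF v. h v) = ereal m"
    using prox_objective_INF_finite[OF lsc proper cvx c, of z] unfolding h_def by blast
  \<comment> \<open>a minimizing sequence is bounded, and lower semicontinuity passes to a limit point\<close>
  have "\<exists>v. h v < ereal (m + inverse (real (Suc n)))" for n
  proof -
    have "(INF v. h v) < ereal (m + inverse (real (Suc n)))" using m by simp
    then show ?thesis by (simp add: INF_less_iff)
  qed
  then obtain y where y: "\<And>n. h (y n) < ereal (m + inverse (real (Suc n)))" by metis
  define R where "R = max 1 (2 * (\<bar>K + (m + 1)\<bar> + a))"
  have "norm (y n - z) \<le> R" for n
    unfolding R_def
  proof (rule quadratic_sublevel_bound[OF norm_ge_zero a])
    have "ereal ((norm (y n - z))\<^sup>2 / 2 - a * norm (y n - z) - K) < ereal (m + inverse (real (Suc n)))"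
      using minor[of "y n"] y[of n] by (rule le_less_trans)
    moreover have "inverse (real (Suc n)) \<le> 1" by (simp add: inverse_le_1_iff)
    ultimately show "(norm (y n - z))\<^sup>2 / 2 - a * norm (y n - z) - K \<le> m + 1" by simp
  qed
  then have "norm (y n) \<le> norm z + R" for n
    using norm_triangle_sub[of "y n" z] by (smt (verit))
  then have "bounded (range y)" unfolding bounded_iff by blast
  then obtain p \<sigma> where \<sigma>: "strict_mono (\<sigma> :: nat \<Rightarrow> nat)" "(y \<circ> \<sigma>) \<longlonglongrightarrow> p"
    using bounded_imp_convergent_subsequence by blast
  have "h p \<le> ereal (m + 0)"
    unfolding h_def
  proof (rule prox_objective_limit_le[OF lsc _ c \<sigma>(2)])
    show "\<forall>x. g x \<noteq> -\<infinity>" using proper by (simp add: proper_fun_def)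
    show "(\<lambda>n. m + inverse (real (Suc (\<sigma> n)))) \<longlonglongrightarrow> m + 0"
      using LIMSEQ_subseq_LIMSEQ[OF LIMSEQ_inverse_real_of_nat \<sigma>(1)]
      by (intro tendsto_intros) (simp add: comp_def)
    show "ereal c * g ((y \<circ> \<sigma>) n) + ereal ((norm ((y \<circ> \<sigma>) n - z))\<^sup>2 / 2)
        \<le> ereal (m + inverse (real (Suc (\<sigma> n))))" for n
      using y[of "\<sigma> n"] by (simp add: h_def)
  qed
  then have "h p \<le> h v" for v
    using m INF_lower[of v UNIV h] by simp
  then show ?thesis unfolding h_def by blast
qed

lemma prox_minimizer_variational_ineq:
  fixes g :: "'a::real_inner \<Rightarrow> ereal"
  assumes proper: "proper_fun g" and cvx: "convex_fun g" and c: "c > 0"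
    and min: "\<forall>v. ereal c * g p + ereal ((norm (p - z))\<^sup>2 / 2) \<le> ereal c * g v + ereal ((norm (v - z))\<^sup>2 / 2)"
  shows "g p = ereal (real_of_ereal (g p))"
    and "\<And>v V. g v = ereal V \<Longrightarrow> (z - p) \<bullet> (v - p) \<le> c * (V - real_of_ereal (g p))"
proof -
  have not_minf: "\<forall>x. g x \<noteq> -\<infinity>" using proper by (simp add: proper_fun_def)
  obtain v0 where "g v0 \<noteq> \<infinity>" using proper by (auto simp: proper_fun_def)
  then have "ereal c * g v0 + ereal ((norm (v0 - z))\<^sup>2 / 2) \<noteq> \<infinity>"
    using not_minf c by (cases "g v0") auto
  then have "g p \<noteq> \<infinity>" using min[rule_format, of v0] c by auto
  then obtain P where P: "g p = ereal P" using not_minf by (cases "g p") auto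
  then show "g p = ereal (real_of_ereal (g p))" by simp
  fix v V assume V: "g v = ereal V"
  \<comment> \<open>compare the minimum with the objective at \<open>p + a (v - p)\<close> and let \<open>a \<rightarrow> 0\<close>\<close>
  have "(z - p) \<bullet> (v - p) \<le> c * (V - P) + a * ((norm (v - p))\<^sup>2 / 2)" if a: "0 < a" "a \<le> 1" for a
  proof -
    define w where "w = (1 - a) *\<^sub>R p + a *\<^sub>R v"
    have "g w \<le> ereal (1 - a) * g p + ereal a * g v" using cvx a unfolding convex_fun_def w_def by auto
    then have gw: "g w \<le> ereal ((1 - a) * P + a * V)" using P V by simp
    then obtain Wv where Wv: "g w = ereal Wv" using not_minf by (cases "g w") auto
    have "c * P + (norm (p - z))\<^sup>2 / 2 \<le> c * Wv + (norm (w - z))\<^sup>2 / 2"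
      using min[rule_format, of w] P Wv by simp
    moreover have "(norm (w - z))\<^sup>2 = (norm (p - z))\<^sup>2 + 2 * a * ((p - z) \<bullet> (v - p)) + a\<^sup>2 * (norm (v - p))\<^sup>2"
      unfolding power2_norm_eq_inner
      by (simp add: w_def algebra_simps inner_add_left inner_add_right inner_diff_left inner_diff_right
          inner_commute power2_eq_square)
    moreover have "c * Wv \<le> c * ((1 - a) * P + a * V)" using gw Wv c by simp
    ultimately have "0 \<le> a * (c * (V - P) + (p - z) \<bullet> (v - p) + a * ((norm (v - p))\<^sup>2 / 2))"
      by (simp add: algebra_simps power2_eq_square)
    then have "0 \<le> c * (V - P) + (p - z) \<bullet> (v - p) + a * ((norm (v - p))\<^sup>2 / 2)"
      using a by (simp add: zero_le_mult_iff)
    then show ?thesis by (simp add: inner_diff_left)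
  qed
  then have "(z - p) \<bullet> (v - p) \<le> c * (V - P)"
    using le_of_vanishing_slack[of "(norm (v - p))\<^sup>2 / 2"] by simp
  then show "(z - p) \<bullet> (v - p) \<le> c * (V - real_of_ereal (g p))" using P by simp
qed

lemma prox_minimizers_firmly_nonexpansive:
  fixes g :: "'a::real_inner \<Rightarrow> ereal"
  assumes proper: "proper_fun g" and cvx: "convex_fun g" and c: "c > 0"
    and min1: "\<forall>v. ereal c * g p1 + ereal ((norm (p1 - z1))\<^sup>2 / 2) \<le> ereal c * g v + ereal ((norm (v - z1))\<^sup>2 / 2)"
    and min2: "\<forall>v. ereal c * g p2 + ereal ((norm (p2 - z2))\<^sup>2 / 2) \<le> ereal c * g v + ereal ((norm (v - z2))\<^sup>2 / 2)"
  shows "(norm (p1 - p2))\<^sup>2 \<le> (z1 - z2) \<bullet> (p1 - p2)"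
proof -
  note vi1 = prox_minimizer_variational_ineq[OF proper cvx c min1]
  note vi2 = prox_minimizer_variational_ineq[OF proper cvx c min2]
  have "(z1 - p1) \<bullet> (p2 - p1) \<le> c * (real_of_ereal (g p2) - real_of_ereal (g p1))"
    using vi1(2)[OF vi2(1)] .
  moreover have "(z2 - p2) \<bullet> (p1 - p2) \<le> c * (real_of_ereal (g p1) - real_of_ereal (g p2))"
    using vi2(2)[OF vi1(1)] .
  moreover have "(z1 - p1) \<bullet> (p2 - p1) + (z2 - p2) \<bullet> (p1 - p2) = (p1 - p2) \<bullet> (p1 - p2) - (z1 - z2) \<bullet> (p1 - p2)"
    by (simp add: inner_diff_left inner_diff_right inner_commute algebra_simps)
  moreover have "c * (real_of_ereal (g p2) - real_of_ereal (g p1))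
      + c * (real_of_ereal (g p1) - real_of_ereal (g p2)) = 0"
    by (simp add: algebra_simps)
  ultimately have "(p1 - p2) \<bullet> (p1 - p2) \<le> (z1 - z2) \<bullet> (p1 - p2)" by linarith
  then show ?thesis by (simp only: power2_norm_eq_inner)
qed

lemma prox_eq_minimizer:
  fixes g :: "'a::euclidean_space \<Rightarrow> ereal"
  assumes lsc: "lsc_fun g" and proper: "proper_fun g" and cvx: "convex_fun g" and c: "c > 0"
  shows "\<forall>v. ereal c * g (prox (\<lambda>v. ereal c * g v) z) + ereal ((norm (prox (\<lambda>v. ereal c * g v) z - z))\<^sup>2 / 2)
            \<le> ereal c * g v + ereal ((norm (v - z))\<^sup>2 / 2)"
proof -
  let ?min = "\<lambda>p. \<forall>v. ereal c * g p + ereal ((norm (p - z))\<^sup>2 / 2) \<le> ereal c * g v + ereal ((norm (v - z))\<^sup>2 / 2)"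
  obtain p where p: "?min p" using prox_objective_has_min[OF lsc proper cvx c] by blast
  have unique: "q = p" if "?min q" for q
  proof -
    have "(norm (q - p))\<^sup>2 \<le> 0"
      using prox_minimizers_firmly_nonexpansive[OF proper cvx c that p] by simp
    then show ?thesis by simp
  qed
  have "prox (\<lambda>v. ereal c * g v) z = p"
    unfolding prox_def by (rule the_equality[where P = ?min, OF p unique])
  then show ?thesis using p by simp
qed

lemma prox_nonexpansive:
  fixes g :: "'a::euclidean_space \<Rightarrow> ereal"
  assumes lsc: "lsc_fun g" and proper: "proper_fun g" and cvx: "convex_fun g" and c: "c > 0"
  shows "nonexpansive (prox (\<lambda>v. ereal c * g v))"
  unfolding nonexpansive_def
proof (intro allI)
  fix z1 z2 :: 'a
  define p1 p2 where "p1 = prox (\<lambda>v. ereal c * g v) z1" "p2 = prox (\<lambda>v. ereal c * g v) z2"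
  have "(norm (p1 - p2))\<^sup>2 \<le> (z1 - z2) \<bullet> (p1 - p2)"
    unfolding p1_p2_def
    by (rule prox_minimizers_firmly_nonexpansive[OF proper cvx c prox_eq_minimizer[OF assms]
          prox_eq_minimizer[OF assms]])
  also have "\<dots> \<le> norm (z1 - z2) * norm (p1 - p2)" by (rule norm_cauchy_schwarz)
  finally have "norm (p1 - p2) * norm (p1 - p2) \<le> norm (z1 - z2) * norm (p1 - p2)"
    by (simp add: power2_eq_square)
  then show "norm (p1 - p2) \<le> norm (z1 - z2)"
    by (cases "norm (p1 - p2) = 0") (auto simp: mult_le_cancel_right)
qed

lemma fb_step_nonexpansive:
  fixes f :: "'a::euclidean_space \<Rightarrow> real" and g :: "'a \<Rightarrow> ereal"
  assumes "convex_on UNIV f" "is_gradient f gf" "L-lipschitz_on UNIV gf" "L > 0"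
    and "lsc_fun g" "proper_fun g" "convex_fun g" and c: "0 < c" "c \<le> 1 / L"
  shows "nonexpansive (fb_step c g gf)"
proof -
  have "c \<le> 2 / L" using c \<open>L > 0\<close> by (simp add: divide_right_mono order.trans)
  then have grad: "nonexpansive (\<lambda>a. a - c *\<^sub>R gf a)"
    using gradient_step_nonexpansive[OF assms(1-4)] c by simp
  show ?thesis
    unfolding nonexpansive_def fb_step_def
  proof (intro allI)
    fix a b :: 'a
    have "norm (prox (\<lambda>v. ereal c * g v) (a - c *\<^sub>R gf a) - prox (\<lambda>v. ereal c * g v) (b - c *\<^sub>R gf b))
        \<le> norm ((a - c *\<^sub>R gf a) - (b - c *\<^sub>R gf b))"
      using prox_nonexpansive[OF assms(5-7) c(1)] by (rule nonexpansiveD)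
    also have "\<dots> \<le> norm (a - b)" using grad by (rule nonexpansiveD)
    finally show "norm (prox (\<lambda>v. ereal c * g v) (a - c *\<^sub>R gf a)
        - prox (\<lambda>v. ereal c * g v) (b - c *\<^sub>R gf b)) \<le> norm (a - b)" .
  qed
qed

section \<open>Real sequences\<close>

lemma nonneg_not_summable_sums_unbounded:
  fixes \<gamma> :: "nat \<Rightarrow> real"
  assumes nonneg: "\<And>n. 0 \<le> \<gamma> n" and not_summable: "\<not> summable \<gamma>"
  shows "\<exists>m. B < (\<Sum>i<m. \<gamma> (N + i))"
proof (rule ccontr)
  assume "\<nexists>m. B < (\<Sum>i<m. \<gamma> (N + i))"
  then have bounded: "(\<Sum>i<m. \<gamma> (N + i)) \<le> B" for m by (simp add: not_less)
  have "(\<Sum>i\<le>n. \<gamma> (i + N)) \<le> B" for n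
    using bounded[of "Suc n"] by (simp add: lessThan_Suc_atMost add.commute)
  then have "summable (\<lambda>i. \<gamma> (i + N))"
    using nonneg by (intro bounded_imp_summable) auto
  then show False using not_summable by (simp add: summable_iff_shift)
qed

lemma decay_le_exp_neg_sum:
  fixes t \<gamma> :: "nat \<Rightarrow> real"
  assumes step: "\<And>n. n \<ge> N \<Longrightarrow> t (Suc n) \<le> exp (- \<gamma> n) * t n" and nonneg: "\<And>n. 0 \<le> t n"
  shows "t (N + m) \<le> exp (- (\<Sum>i<m. \<gamma> (N + i))) * t N"
proof (induction m)
  case (Suc m)
  have "t (N + Suc m) \<le> exp (- \<gamma> (N + m)) * t (N + m)" using step[of "N + m"] by simp
  also have "\<dots> \<le> exp (- \<gamma> (N + m)) * (exp (- (\<Sum>i<m. \<gamma> (N + i))) * t N)"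
    using Suc by (intro mult_left_mono) auto
  also have "\<dots> = exp (- (\<Sum>i<Suc m. \<gamma> (N + i))) * t N"
    by (simp add: mult.assoc flip: exp_add)
  finally show ?case .
qed simp

lemma Xu_lemma:
  fixes s \<gamma> \<delta> :: "nat \<Rightarrow> real"
  assumes s_nonneg: "\<And>n. 0 \<le> s n" and \<gamma>_range: "\<And>n. 0 \<le> \<gamma> n \<and> \<gamma> n \<le> 1"
    and \<gamma>_not_summable: "\<not> summable \<gamma>"
    and recursion: "eventually (\<lambda>n. s (Suc n) \<le> (1 - \<gamma> n) * s n + \<gamma> n * \<delta> n) sequentially"
    and \<delta>_small: "\<And>\<epsilon>. \<epsilon> > 0 \<Longrightarrow> eventually (\<lambda>n. \<delta> n \<le> \<epsilon>) sequentially"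
  shows "s \<longlonglongrightarrow> 0"
proof (rule LIMSEQ_I)
  fix r :: real assume "r > 0"
  define \<epsilon> where "\<epsilon> = r / 3"
  have \<epsilon>: "\<epsilon> > 0" using \<open>r > 0\<close> by (simp add: \<epsilon>_def)
  from eventually_conj[OF recursion \<delta>_small[OF \<epsilon>]] obtain N where
    N: "\<And>n. n \<ge> N \<Longrightarrow> s (Suc n) \<le> (1 - \<gamma> n) * s n + \<gamma> n * \<delta> n \<and> \<delta> n \<le> \<epsilon>"
    by (auto simp: eventually_sequentially)
  \<comment> \<open>the excess of \<open>s\<close> over \<open>\<epsilon>\<close> decays like \<open>exp (- \<Sum> \<gamma>)\<close>\<close>
  define t where "t n = max (s n - \<epsilon>) 0" for n
  have t_nonneg: "t n \<ge> 0" for n by (simp add: t_def)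
  have t_step: "t (Suc n) \<le> exp (- \<gamma> n) * t n" if "n \<ge> N" for n
  proof -
    have "\<gamma> n * \<delta> n \<le> \<gamma> n * \<epsilon>" using N[OF that] \<gamma>_range[of n] by (simp add: mult_left_mono)
    then have "s (Suc n) - \<epsilon> \<le> (1 - \<gamma> n) * (s n - \<epsilon>)" using N[OF that] by (simp add: algebra_simps)
    also have "\<dots> \<le> (1 - \<gamma> n) * t n" using \<gamma>_range[of n] by (intro mult_left_mono) (auto simp: t_def)
    also have "\<dots> \<le> exp (- \<gamma> n) * t n"
      using exp_ge_add_one_self[of "- \<gamma> n"] t_nonneg[of n] by (intro mult_right_mono) auto
    finally show ?thesis using t_nonneg[of n] by (auto simp: t_def)
  qed
  have t_decay: "t (N + m) \<le> exp (- (\<Sum>i<m. \<gamma> (N + i))) * t N" for m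
    using t_step t_nonneg by (rule decay_le_exp_neg_sum)
  obtain m0 where m0: "(\<Sum>i<m0. \<gamma> (N + i)) > ln ((t N + 1) / \<epsilon>)"
    using nonneg_not_summable_sums_unbounded \<gamma>_range \<gamma>_not_summable by blast
  show "\<exists>no. \<forall>n\<ge>no. norm (s n - 0) < r"
  proof (intro exI allI impI)
    fix n assume n: "n \<ge> N + m0"
    define m where "m = n - N"
    have n_eq: "n = N + m" and "m \<ge> m0" using n by (auto simp: m_def)
    then have "(\<Sum>i<m0. \<gamma> (N + i)) \<le> (\<Sum>i<m. \<gamma> (N + i))"
      using \<gamma>_range by (intro sum_mono2) auto
    with m0 have "exp (- (\<Sum>i<m. \<gamma> (N + i))) < exp (- ln ((t N + 1) / \<epsilon>))" by simp
    also have "\<dots> = \<epsilon> / (t N + 1)" using \<epsilon> t_nonneg[of N] by (simp add: exp_minus ln_div exp_diff)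
    finally have "exp (- (\<Sum>i<m. \<gamma> (N + i))) * t N \<le> \<epsilon> / (t N + 1) * t N"
      using t_nonneg[of N] by (intro mult_right_mono) auto
    also have "\<dots> \<le> \<epsilon>" using t_nonneg[of N] \<epsilon> by (simp add: field_simps)
    finally have "t n \<le> \<epsilon>" using t_decay[of m] n_eq by simp
    then have "s n \<le> 2 * \<epsilon>" by (simp add: t_def)
    then show "norm (s n - 0) < r" using s_nonneg[of n] \<open>r > 0\<close> by (simp add: t_def \<epsilon>_def)
  qed
qed

lemma abs_weight_diff_le:
  fixes a a' b b' :: real
  assumes "0 \<le> a'" "a' \<le> 1" "0 \<le> b" "b \<le> 1"
  shows "\<bar>(1 - a') * b' - (1 - a) * b\<bar> \<le> \<bar>a' - a\<bar> + \<bar>b' - b\<bar>"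
proof -
  have e: "(1 - a') * b' - (1 - a) * b = (1 - a') * (b' - b) - b * (a' - a)" by (simp add: algebra_simps)
  have "\<bar>(1 - a') * (b' - b)\<bar> \<le> \<bar>b' - b\<bar>" "\<bar>b * (a' - a)\<bar> \<le> \<bar>a' - a\<bar>"
    using assms by (simp_all add: abs_mult mult_left_le_one_le)
  then show ?thesis unfolding e by (smt (verit))
qed

lemma sq_le_of_mixed_bound:
  fixes A b q e :: real
  assumes "0 \<le> q" "q \<le> 1" and "A\<^sup>2 \<le> q * b * A + e"
  shows "A\<^sup>2 \<le> q * b\<^sup>2 + 2 * e"
proof -
  have "2 * (q * b * A) \<le> (q * b)\<^sup>2 + A\<^sup>2"
    using sum_squares_ge_zero[of "q * b - A" 0] by (simp add: power2_eq_square algebra_simps)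
  moreover have "(q * b)\<^sup>2 \<le> q * b\<^sup>2"
  proof -
    have "q * (q * b\<^sup>2) \<le> q * b\<^sup>2"
      using assms(1,2) by (intro mult_left_mono mult_left_le_one_le) auto
    then show ?thesis by (simp add: power2_eq_square mult.commute mult.left_commute)
  qed
  ultimately show ?thesis using assms(3) by linarith
qed

lemma limsup_finite_imp_eventually_le:
  assumes "limsup (\<lambda>k. ereal (f k)) < \<infinity>"
  obtains C where "C \<ge> 0" "eventually (\<lambda>k. f k \<le> C) sequentially"
proof -
  obtain n where "limsup (\<lambda>k. ereal (f k)) < ereal (real n)"
    using assms by (auto simp: less_PInf_Ex_of_nat)
  from Limsup_lessD[OF this] have "eventually (\<lambda>k. f k \<le> real n) sequentially"
    by eventually_elim simp
  then show thesis by (rule that[rotated]) simp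
qed

lemma nonneg_limsup_zero_imp_tendsto_zero:
  assumes "\<And>k. 0 \<le> f k" and "limsup (\<lambda>k. ereal (f k)) = 0"
  shows "f \<longlonglongrightarrow> 0"
proof (rule order_tendstoI)
  fix a :: real assume "a < 0"
  then show "eventually (\<lambda>k. a < f k) sequentially"
    by (intro always_eventually allI less_le_trans[OF _ assms(1)])
next
  fix a :: real assume "0 < a"
  then have "limsup (\<lambda>k. ereal (f k)) < ereal a" using assms(2) by simp
  from Limsup_lessD[OF this] show "eventually (\<lambda>k. f k < a) sequentially" by simp
qed

section \<open>The trilevel iteration\<close>

locale trilevel_iteration =
  fixes S T W :: "'a::euclidean_space \<Rightarrow> 'a" and r :: real and \<alpha> \<beta> :: "nat \<Rightarrow> real"
    and x :: "nat \<Rightarrow> 'a"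
  assumes S_contraction: "contraction r S"
    and T_nonexpansive: "nonexpansive T" and W_nonexpansive: "nonexpansive W"
    and \<alpha>_range: "\<And>k. 0 < \<alpha> k \<and> \<alpha> k < 1" and \<beta>_range: "\<And>k. 0 < \<beta> k \<and> \<beta> k < 1"
    and iter: "\<And>k. x (Suc k) = \<alpha> k *\<^sub>R S (x k) + ((1 - \<alpha> k) * \<beta> k) *\<^sub>R T (x k)
                           + ((1 - \<alpha> k) * (1 - \<beta> k)) *\<^sub>R W (x k)"
    and x_bounded: "bounded (range x)"
begin

lemma r_range: "0 \<le> r" "r < 1"
  using contractionD(1,2)[OF S_contraction] by auto

lemma iter_bounds:
  obtains M where "\<And>k. norm (x k) \<le> M" "\<And>k. norm (S (x k)) \<le> M"
    "\<And>k. norm (T (x k)) \<le> M" "\<And>k. norm (W (x k)) \<le> M"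
proof -
  obtain B where B: "\<And>k. norm (x k) \<le> B"
    using x_bounded unfolding bounded_iff by blast
  define M where "M = norm (S 0) + norm (T 0) + norm (W 0) + B"
  have "norm (x k) \<le> M" "norm (S (x k)) \<le> M" "norm (T (x k)) \<le> M" "norm (W (x k)) \<le> M" for k
    using B[of k] nonexpansive_norm_le_affine[of _ "x k"] T_nonexpansive W_nonexpansive
      contraction_imp_nonexpansive[OF S_contraction]
      norm_ge_zero[of "S 0"] norm_ge_zero[of "T 0"] norm_ge_zero[of "W 0"]
    unfolding M_def by (smt (verit))+
  then show thesis by (rule that)
qed

lemma combination_diff_le:
  assumes "0 \<le> a" "0 \<le> b" "0 \<le> c" "a + b + c = 1"
  shows "norm (a *\<^sub>R (S X - S Y) + b *\<^sub>R (T X - T Y) + c *\<^sub>R (W X - W Y)) \<le> (1 - a * (1 - r)) * norm (X - Y)"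
proof -
  have "norm (a *\<^sub>R (S X - S Y) + b *\<^sub>R (T X - T Y) + c *\<^sub>R (W X - W Y))
      \<le> a * norm (S X - S Y) + b * norm (T X - T Y) + c * norm (W X - W Y)"
    using assms by (intro norm_triangle_le add_mono) (auto simp: norm_triangle_ineq)
  also have "\<dots> \<le> a * (r * norm (X - Y)) + b * norm (X - Y) + c * norm (X - Y)"
    using assms contractionD(3)[OF S_contraction] nonexpansiveD[OF T_nonexpansive]
      nonexpansiveD[OF W_nonexpansive]
    by (intro add_mono mult_left_mono) auto
  also have "\<dots> = (a * r + b + c) * norm (X - Y)" by (simp add: algebra_simps)
  also have "a * r + b + c = 1 - a * (1 - r)" using assms(4) by (simp add: algebra_simps)
  finally show ?thesis .
qed

lemma iter_diff_le:
  assumes M: "\<And>k. norm (S (x k)) \<le> M \<and> norm (T (x k)) \<le> M \<and> norm (W (x k)) \<le> M"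
  shows "norm (x (Suc (Suc n)) - x (Suc n)) \<le> (1 - \<alpha> (Suc n) * (1 - r)) * norm (x (Suc n) - x n)
           + 3 * M * (\<bar>\<alpha> (Suc n) - \<alpha> n\<bar> + \<bar>\<beta> (Suc n) - \<beta> n\<bar>)"
proof -
  define a a' b b' where "a = \<alpha> n" "a' = \<alpha> (Suc n)" "b = \<beta> n" "b' = \<beta> (Suc n)"
  define X Y where "X = x (Suc n)" "Y = x n"
  define \<Delta> where "\<Delta> = \<bar>a' - a\<bar> + \<bar>b' - b\<bar>"
  \<comment> \<open>same weights at different points, plus different weights at the same point\<close>
  define P where "P = a' *\<^sub>R (S X - S Y) + ((1 - a') * b') *\<^sub>R (T X - T Y)
    + ((1 - a') * (1 - b')) *\<^sub>R (W X - W Y)"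
  define Q where "Q = (a' - a) *\<^sub>R S Y + ((1 - a') * b' - (1 - a) * b) *\<^sub>R T Y
    + ((1 - a') * (1 - b') - (1 - a) * (1 - b)) *\<^sub>R W Y"
  have ab: "0 < a" "a < 1" "0 < a'" "a' < 1" "0 < b" "b < 1" "0 < b'" "b' < 1"
    using \<alpha>_range \<beta>_range by (auto simp: a_a'_b_b'_def)
  have i1: "x (Suc (Suc n)) = a' *\<^sub>R S X + ((1 - a') * b') *\<^sub>R T X + ((1 - a') * (1 - b')) *\<^sub>R W X"
    unfolding a_a'_b_b'_def X_Y_def by (rule iter)
  have i2: "X = a *\<^sub>R S Y + ((1 - a) * b) *\<^sub>R T Y + ((1 - a) * (1 - b)) *\<^sub>R W Y"
    unfolding a_a'_b_b'_def X_Y_def by (rule iter)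
  have weights: "0 \<le> (1 - a') * b'" "0 \<le> (1 - a') * (1 - b')" using ab by simp_all
  have "x (Suc (Suc n)) - X = P + Q"
    unfolding i1 P_def Q_def by (subst (2) i2) (simp add: algebra_simps)
  then have "norm (x (Suc (Suc n)) - X) \<le> norm P + norm Q" by (simp add: norm_triangle_ineq)
  moreover have "norm P \<le> (1 - a' * (1 - r)) * norm (X - Y)"
    unfolding P_def using weights
    by (rule combination_diff_le[rotated]) (use ab in \<open>simp_all add: algebra_simps\<close>)
  moreover have "norm Q \<le> 3 * M * \<Delta>"
  proof -
    have "norm Q \<le> \<bar>a' - a\<bar> * norm (S Y) + \<bar>(1 - a') * b' - (1 - a) * b\<bar> * norm (T Y)
        + \<bar>(1 - a') * (1 - b') - (1 - a) * (1 - b)\<bar> * norm (W Y)"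
      unfolding Q_def by (intro norm_triangle_le add_mono) (auto simp: norm_triangle_ineq)
    also have "\<dots> \<le> \<Delta> * M + \<Delta> * M + \<Delta> * M"
      using M[of n] abs_weight_diff_le[of a' b b' a] abs_weight_diff_le[of a' "1 - b" "1 - b'" a] ab
      by (intro add_mono mult_mono) (auto simp: X_Y_def \<Delta>_def)
    finally show ?thesis by (simp add: algebra_simps)
  qed
  ultimately show ?thesis by (simp add: a_a'_b_b'_def X_Y_def \<Delta>_def)
qed

lemma scaled_step_recursion:
  assumes M: "\<And>k. norm (S (x k)) \<le> M \<and> norm (T (x k)) \<le> M \<and> norm (W (x k)) \<le> M"
    and K: "K \<ge> 0" and \<beta>_var: "1 / \<alpha> (Suc n) * \<bar>1 / \<beta> (Suc n) - 1 / \<beta> n\<bar> \<le> K"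
    and \<beta>_small: "\<beta> n * K \<le> (1 - r) / 2"
  shows "norm (x (Suc (Suc n)) - x (Suc n)) / \<beta> (Suc n)
    \<le> (1 - \<alpha> (Suc n) * (1 - r) / 2) * (norm (x (Suc n) - x n) / \<beta> n)
      + 3 * M * (\<bar>\<alpha> (Suc n) - \<alpha> n\<bar> + \<bar>\<beta> (Suc n) - \<beta> n\<bar>) / \<beta> (Suc n)"
proof -
  define a' b b' where "a' = \<alpha> (Suc n)" "b = \<beta> n" "b' = \<beta> (Suc n)"
  define c where "c = 1 - r"
  define D D' where "D = norm (x (Suc n) - x n)" "D' = norm (x (Suc (Suc n)) - x (Suc n))"
  define E where "E = 3 * M * (\<bar>\<alpha> (Suc n) - \<alpha> n\<bar> + \<bar>\<beta> (Suc n) - \<beta> n\<bar>)"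
  have ab: "0 < a'" "a' < 1" "0 < b" "b < 1" "0 < b'" "b' < 1"
    using \<alpha>_range \<beta>_range by (auto simp: a'_b_b'_def)
  have c: "0 < c" "c \<le> 1" using r_range by (auto simp: c_def)
  have "D \<ge> 0" by (simp add: D_D'_def)
  have contr: "0 \<le> 1 - a' * c" using ab c by (simp add: mult_le_one)
  \<comment> \<open>\<open>b / b'\<close> exceeds \<open>1\<close> by at most \<open>b a' K \<le> a' c / 2\<close>, half of the contraction gain\<close>
  have "\<bar>1 / b' - 1 / b\<bar> \<le> a' * K"
    using \<beta>_var ab by (simp add: a'_b_b'_def divide_le_eq mult.commute)
  have "b / b' = 1 + b * (1 / b' - 1 / b)" using ab by (simp add: field_simps)
  also have "\<dots> \<le> 1 + b * (a' * K)"
    using ab \<open>\<bar>1 / b' - 1 / b\<bar> \<le> a' * K\<close> by (auto intro!: mult_left_mono order.trans[OF abs_ge_self])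
  finally have ratio: "b / b' \<le> 1 + b * (a' * K)" .
  have "(1 - a' * c) * (1 + b * (a' * K)) \<le> 1 - a' * c + a' * (b * K)"
    using ab c K contr by (simp add: algebra_simps mult_le_cancel_left1)
  also have "\<dots> \<le> 1 - a' * c / 2"
  proof -
    have "a' * (b * K) \<le> a' * (c / 2)"
      using \<beta>_small ab by (intro mult_left_mono) (auto simp: a'_b_b'_def c_def)
    then show ?thesis by linarith
  qed
  finally have gain: "(1 - a' * c) * (1 + b * (a' * K)) \<le> 1 - a' * c / 2" .
  have "D' / b' \<le> ((1 - a' * c) * D + E) / b'"
    using iter_diff_le[OF M, of n] ab by (simp add: D_D'_def E_def a'_b_b'_def c_def divide_right_mono)
  also have "\<dots> = (1 - a' * c) * (D / b) * (b / b') + E / b'"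
    using ab by (simp add: field_simps)
  also have "(1 - a' * c) * (D / b) * (b / b') \<le> (1 - a' * c) * (D / b) * (1 + b * (a' * K))"
    using ratio contr \<open>D \<ge> 0\<close> ab by (intro mult_left_mono) auto
  also have "\<dots> = (1 - a' * c) * (1 + b * (a' * K)) * (D / b)" by simp
  also have "\<dots> \<le> (1 - a' * c / 2) * (D / b)"
    using gain \<open>D \<ge> 0\<close> ab by (intro mult_right_mono) auto
  finally show ?thesis by (simp add: D_D'_def E_def a'_b_b'_def c_def)
qed

lemma steps_over_\<beta>_tendsto_0:
  assumes \<beta>_lim: "\<beta> \<longlonglongrightarrow> 0" and \<alpha>_not_summable: "\<not> summable \<alpha>" and K: "K \<ge> 0"
    and \<beta>_var: "eventually (\<lambda>k. 1 / \<alpha> (Suc k) * \<bar>1 / \<beta> (Suc k) - 1 / \<beta> k\<bar> \<le> K) sequentially"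
    and slow_weights: "(\<lambda>k. (\<bar>\<beta> (Suc k) - \<beta> k\<bar> + \<bar>\<alpha> (Suc k) - \<alpha> k\<bar>) / (\<alpha> (Suc k) * \<beta> (Suc k)))
      \<longlonglongrightarrow> 0"
  shows "(\<lambda>k. norm (x (Suc k) - x k) / \<beta> k) \<longlonglongrightarrow> 0"
proof -
  obtain M where M: "\<And>k. norm (S (x k)) \<le> M \<and> norm (T (x k)) \<le> M \<and> norm (W (x k)) \<le> M"
    using iter_bounds by metis
  define c where "c = 1 - r"
  have c: "0 < c" "c \<le> 1" using r_range by (auto simp: c_def)
  define s where "s n = norm (x (Suc n) - x n) / \<beta> n" for n
  define \<gamma> where "\<gamma> n = \<alpha> (Suc n) * c / 2" for n
  define \<delta> where "\<delta> n = 6 * M / c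
    * ((\<bar>\<beta> (Suc n) - \<beta> n\<bar> + \<bar>\<alpha> (Suc n) - \<alpha> n\<bar>) / (\<alpha> (Suc n) * \<beta> (Suc n)))" for n
  have s_nonneg: "0 \<le> s n" for n using \<beta>_range[of n] by (simp add: s_def)
  have \<gamma>_range: "0 \<le> \<gamma> n \<and> \<gamma> n \<le> 1" for n
    using \<alpha>_range[of "Suc n"] c mult_le_one[of "\<alpha> (Suc n)" c] by (auto simp: \<gamma>_def)
  have "\<not> summable (\<lambda>n. \<alpha> (Suc n))" using \<alpha>_not_summable summable_Suc_iff by blast
  then have \<gamma>_not_summable: "\<not> summable \<gamma>"
    using summable_mult[of \<gamma> "2 / c"] c by (auto simp: \<gamma>_def)
  have "(\<lambda>n. \<beta> n * K) \<longlonglongrightarrow> 0 * K" by (intro tendsto_intros \<beta>_lim)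
  then have "eventually (\<lambda>n. \<beta> n * K < c / 2) sequentially"
    using c by (intro order_tendstoD(2)) auto
  then have "eventually (\<lambda>n. s (Suc n) \<le> (1 - \<gamma> n) * s n + \<gamma> n * \<delta> n) sequentially"
    using \<beta>_var
  proof eventually_elim
    case (elim n)
    then have "s (Suc n) \<le> (1 - \<gamma> n) * s n
      + 3 * M * (\<bar>\<alpha> (Suc n) - \<alpha> n\<bar> + \<bar>\<beta> (Suc n) - \<beta> n\<bar>) / \<beta> (Suc n)"
      using scaled_step_recursion[OF M K] by (simp add: s_def \<gamma>_def c_def)
    also have "3 * M * (\<bar>\<alpha> (Suc n) - \<alpha> n\<bar> + \<bar>\<beta> (Suc n) - \<beta> n\<bar>) / \<beta> (Suc n) = \<gamma> n * \<delta> n"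
      using \<alpha>_range[of "Suc n"] \<beta>_range[of "Suc n"] c by (simp add: \<gamma>_def \<delta>_def field_simps)
    finally show ?case .
  qed
  moreover have "\<delta> \<longlonglongrightarrow> 6 * M / c * 0"
    unfolding \<delta>_def by (intro tendsto_mult tendsto_const slow_weights)
  then have "eventually (\<lambda>n. \<delta> n \<le> \<epsilon>) sequentially" if "\<epsilon> > 0" for \<epsilon>
    using order_tendstoD(2)[of \<delta> 0 sequentially \<epsilon>] that by (auto elim: eventually_mono)
  ultimately have "s \<longlonglongrightarrow> 0"
    by (intro Xu_lemma[OF s_nonneg \<gamma>_range \<gamma>_not_summable])
  then show ?thesis by (simp add: s_def[abs_def])
qed

lemma T_residual_le:
  assumes "W y = y"
  shows "((1 - \<alpha> k) * \<beta> k) * ((x k - T (x k)) \<bullet> (x k - y))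
    \<le> (norm (x (Suc k) - x k) + \<alpha> k * norm (x k - S (x k))) * norm (x k - y)"
proof -
  define a c1 c2 where "a = \<alpha> k" "c1 = (1 - \<alpha> k) * \<beta> k" "c2 = (1 - \<alpha> k) * (1 - \<beta> k)"
  define X where "X = x k"
  have a: "0 < a" "a < 1" "c2 \<ge> 0" using \<alpha>_range[of k] \<beta>_range[of k] by (auto simp: a_c1_c2_def)
  have "X - x (Suc k) = (a + c1 + c2) *\<^sub>R X - x (Suc k)" by (simp add: a_c1_c2_def algebra_simps)
  also have "\<dots> = a *\<^sub>R (X - S X) + c1 *\<^sub>R (X - T X) + c2 *\<^sub>R (X - W X)"
    unfolding iter[of k] by (simp add: a_c1_c2_def X_def algebra_simps)
  finally have "(X - x (Suc k)) \<bullet> (X - y)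
      = a * ((X - S X) \<bullet> (X - y)) + c1 * ((X - T X) \<bullet> (X - y)) + c2 * ((X - W X) \<bullet> (X - y))"
    by (simp add: inner_add_left)
  moreover have "c2 * ((X - W X) \<bullet> (X - y)) \<ge> 0"
    using a nonexpansive_fixpoint_inner_nonneg[OF W_nonexpansive assms] by simp
  moreover have "(X - x (Suc k)) \<bullet> (X - y) \<le> norm (x (Suc k) - X) * norm (X - y)"
    using norm_cauchy_schwarz[of "X - x (Suc k)" "X - y"] by (simp add: norm_minus_commute)
  moreover have "- ((X - S X) \<bullet> (X - y)) \<le> norm (X - S X) * norm (X - y)"
    using Cauchy_Schwarz_ineq2[of "X - S X" "X - y"] by (simp add: abs_le_iff)
  then have "- (a * ((X - S X) \<bullet> (X - y))) \<le> a * (norm (X - S X) * norm (X - y))"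
    using a mult_left_mono[of _ _ a] by fastforce
  ultimately show ?thesis by (simp add: a_c1_c2_def X_def algebra_simps)
qed

end

locale trilevel_iteration_convergence = trilevel_iteration +
  assumes Omega_nonempty: "vi_solutions (\<lambda>z. z - T z) (Fix W) \<noteq> {}"
    and ratio_lim: "filterlim (\<lambda>k. \<beta> k / \<alpha> k) at_top sequentially"
    and \<beta>_lim: "\<beta> \<longlonglongrightarrow> 0" and \<alpha>_lim: "\<alpha> \<longlonglongrightarrow> 0" and \<alpha>_not_summable: "\<not> summable \<alpha>"
    and \<beta>_var_limsup:
      "\<exists>K>0. limsup (\<lambda>k. ereal (1 / \<alpha> (Suc k) * \<bar>1 / \<beta> (Suc k) - 1 / \<beta> k\<bar>)) \<le> ereal K"
    and weights_var_limsup: "limsup (\<lambda>k. ereal ((\<bar>\<beta> (Suc k) - \<beta> k\<bar> + \<bar>\<alpha> (Suc k) - \<alpha> k\<bar>)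
      / (\<alpha> (Suc k) * \<beta> (Suc k)))) = 0"
    and infdist_limsup: "limsup (\<lambda>k. ereal (infdist (x (Suc k)) (Fix W) / \<alpha> k)) < \<infinity>"
begin

lemma \<beta>_var:
  obtains K where "K \<ge> 0" "eventually (\<lambda>k. 1 / \<alpha> (Suc k) * \<bar>1 / \<beta> (Suc k) - 1 / \<beta> k\<bar> \<le> K) sequentially"
proof -
  obtain K where "limsup (\<lambda>k. ereal (1 / \<alpha> (Suc k) * \<bar>1 / \<beta> (Suc k) - 1 / \<beta> k\<bar>)) \<le> ereal K"
    using \<beta>_var_limsup by blast
  then have "limsup (\<lambda>k. ereal (1 / \<alpha> (Suc k) * \<bar>1 / \<beta> (Suc k) - 1 / \<beta> k\<bar>)) < \<infinity>"
    by (rule le_less_trans) simp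
  then show thesis using that by (rule limsup_finite_imp_eventually_le)
qed

lemma weights_var_tendsto_0:
  "(\<lambda>k. (\<bar>\<beta> (Suc k) - \<beta> k\<bar> + \<bar>\<alpha> (Suc k) - \<alpha> k\<bar>) / (\<alpha> (Suc k) * \<beta> (Suc k))) \<longlonglongrightarrow> 0"
proof (rule nonneg_limsup_zero_imp_tendsto_zero[OF _ weights_var_limsup])
  fix k
  show "0 \<le> (\<bar>\<beta> (Suc k) - \<beta> k\<bar> + \<bar>\<alpha> (Suc k) - \<alpha> k\<bar>) / (\<alpha> (Suc k) * \<beta> (Suc k))"
    using \<alpha>_range[of "Suc k"] \<beta>_range[of "Suc k"] by simp
qed

lemma infdist_Fix_le:
  obtains C where "C \<ge> 0" "eventually (\<lambda>k. infdist (x (Suc k)) (Fix W) \<le> C * \<alpha> k) sequentially"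
proof -
  obtain C where C: "C \<ge> 0" "eventually (\<lambda>k. infdist (x (Suc k)) (Fix W) / \<alpha> k \<le> C) sequentially"
    using infdist_limsup by (rule limsup_finite_imp_eventually_le)
  from C(2) have "eventually (\<lambda>k. infdist (x (Suc k)) (Fix W) \<le> C * \<alpha> k) sequentially"
    by eventually_elim (use \<alpha>_range in \<open>simp add: divide_le_eq\<close>)
  with C(1) show thesis by (rule that)
qed

abbreviation Omega :: "'a set" where
  "Omega \<equiv> vi_solutions (\<lambda>z. z - T z) (Fix W)"

lemma Fix_W_nonempty: "Fix W \<noteq> {}"
  using Omega_nonempty vi_solutions_subset by blast

lemma infdist_Fix_tendsto_0: "(\<lambda>k. infdist (x k) (Fix W)) \<longlonglongrightarrow> 0"
proof -
  obtain C where C: "eventually (\<lambda>k. infdist (x (Suc k)) (Fix W) \<le> C * \<alpha> k) sequentially"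
    using infdist_Fix_le by metis
  have bound: "(\<lambda>k. C * \<alpha> k) \<longlonglongrightarrow> 0" using tendsto_mult_right_zero[OF \<alpha>_lim] by simp
  have "(\<lambda>k. infdist (x (Suc k)) (Fix W)) \<longlonglongrightarrow> 0"
    by (rule tendsto_sandwich[OF _ C tendsto_const bound]) (simp add: infdist_nonneg)
  then show ?thesis by (rule LIMSEQ_imp_Suc)
qed

lemma T_residual_bound:
  assumes "y \<in> Fix W"
  obtains e where "e \<longlonglongrightarrow> 0" "\<And>k. (x k - T (x k)) \<bullet> (x k - y) \<le> e k"
proof -
  obtain M where M: "\<And>k. norm (x k) \<le> M" "\<And>k. norm (S (x k)) \<le> M"
    using iter_bounds by metis
  define e where "e k = (norm (x (Suc k) - x k) / \<beta> k + \<alpha> k / \<beta> k * (2 * M)) * (M + norm y) / (1 - \<alpha> k)"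
    for k
  have "(\<lambda>k. \<alpha> k / \<beta> k) \<longlonglongrightarrow> 0"
    using tendsto_inverse_0_at_top[OF ratio_lim] by simp
  moreover obtain K where "K \<ge> 0"
    and "eventually (\<lambda>k. 1 / \<alpha> (Suc k) * \<bar>1 / \<beta> (Suc k) - 1 / \<beta> k\<bar> \<le> K) sequentially"
    using \<beta>_var by blast
  then have "(\<lambda>k. norm (x (Suc k) - x k) / \<beta> k) \<longlonglongrightarrow> 0"
    using steps_over_\<beta>_tendsto_0[OF \<beta>_lim \<alpha>_not_summable _ _ weights_var_tendsto_0] by blast
  ultimately have "e \<longlonglongrightarrow> (0 + 0 * (2 * M)) * (M + norm y) / (1 - 0)"
    unfolding e_def by (intro tendsto_intros \<alpha>_lim) auto
  then have "e \<longlonglongrightarrow> 0" by simp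
  moreover have "(x k - T (x k)) \<bullet> (x k - y) \<le> e k" for k
  proof -
  have ab: "0 < \<alpha> k" "\<alpha> k < 1" "0 < \<beta> k" using \<alpha>_range[of k] \<beta>_range[of k] by auto
  have "norm (x k - S (x k)) \<le> 2 * M" "norm (x k - y) \<le> M + norm y"
    using M[of k] norm_triangle_ineq4[of "x k" "S (x k)"] norm_triangle_ineq4[of "x k" y] by auto
  then have "(norm (x (Suc k) - x k) + \<alpha> k * norm (x k - S (x k))) * norm (x k - y)
      \<le> (norm (x (Suc k) - x k) + \<alpha> k * (2 * M)) * (M + norm y)"
    using ab order.trans[OF norm_ge_zero M(1)[of k]] by (intro mult_mono add_left_mono mult_left_mono) auto
  then have "((1 - \<alpha> k) * \<beta> k) * ((x k - T (x k)) \<bullet> (x k - y))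
      \<le> (norm (x (Suc k) - x k) + \<alpha> k * (2 * M)) * (M + norm y)"
    using T_residual_le[of y k] assms by (simp add: Fix_def)
  then have "(x k - T (x k)) \<bullet> (x k - y)
      \<le> (norm (x (Suc k) - x k) + \<alpha> k * (2 * M)) * (M + norm y) / ((1 - \<alpha> k) * \<beta> k)"
    using ab by (simp add: pos_le_divide_eq mult.commute)
  also have "\<dots> = e k" using ab by (simp add: e_def field_simps)
  finally show ?thesis .
  qed
  ultimately show thesis by (rule that)
qed

lemma limit_point_in_Omega:
  assumes \<tau>: "strict_mono \<tau>" and lim: "(\<lambda>n. x (\<tau> n)) \<longlonglongrightarrow> p"
  shows "p \<in> Omega"
proof -
  have "(\<lambda>n. infdist (x (\<tau> n)) (Fix W)) \<longlonglongrightarrow> infdist p (Fix W)"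
    by (intro tendsto_intros lim)
  moreover have "(\<lambda>n. infdist (x (\<tau> n)) (Fix W)) \<longlonglongrightarrow> 0"
    using LIMSEQ_subseq_LIMSEQ[OF infdist_Fix_tendsto_0 \<tau>] by (simp add: comp_def)
  ultimately have "infdist p (Fix W) = 0" using LIMSEQ_unique by blast
  then have p_Fix: "p \<in> Fix W"
    using in_closed_iff_infdist_zero[OF closed_Fix_nonexpansive[OF W_nonexpansive] Fix_W_nonempty]
    by simp
  \<comment> \<open>Minty's form of the variational inequality passes to the limit\<close>
  have "(y - T y) \<bullet> (y - p) \<ge> 0" if y: "y \<in> Fix W" for y
  proof -
    obtain e where e: "e \<longlonglongrightarrow> 0" "\<And>k. (x k - T (x k)) \<bullet> (x k - y) \<le> e k"
      using T_residual_bound[OF y] by blast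
    have "(\<lambda>n. T (x (\<tau> n))) \<longlonglongrightarrow> T p"
      by (rule continuous_on_tendsto_compose[OF nonexpansive_continuous_on[OF T_nonexpansive, of UNIV] lim]) auto
    then have "(\<lambda>n. (x (\<tau> n) - T (x (\<tau> n))) \<bullet> (x (\<tau> n) - y)) \<longlonglongrightarrow> (p - T p) \<bullet> (p - y)"
      by (intro tendsto_intros lim)
    moreover have "(\<lambda>n. e (\<tau> n)) \<longlonglongrightarrow> 0" using LIMSEQ_subseq_LIMSEQ[OF e(1) \<tau>] by (simp add: comp_def)
    ultimately have "(p - T p) \<bullet> (p - y) \<le> 0" by (rule LIMSEQ_le) (use e(2) in auto)
    then have "(p - T p) \<bullet> (y - p) \<ge> 0" by (simp add: inner_diff_right)
    then show ?thesis
      using nonexpansive_imp_monotone[OF T_nonexpansive, of y p]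
      by (simp add: inner_diff_left)
  qed
  then show ?thesis
    using p_Fix vi_solutions_Minty[OF T_nonexpansive convex_Fix_nonexpansive[OF W_nonexpansive]]
    by simp
qed

lemma eventually_inner_le:
  assumes xs: "xs \<in> vi_solutions (\<lambda>z. z - S z) Omega" and "\<epsilon> > 0"
  shows "eventually (\<lambda>k. (S xs - xs) \<bullet> (x k - xs) \<le> \<epsilon>) sequentially"
proof (rule ccontr)
  assume "\<not> ?thesis"
  then have "infinite {k. \<not> (S xs - xs) \<bullet> (x k - xs) \<le> \<epsilon>}"
    unfolding not_eventually cofinite_eq_sequentially[symmetric] frequently_cofinite by simp
  from infinite_enumerate[OF this] obtain \<sigma> :: "nat \<Rightarrow> nat" where
    "strict_mono \<sigma>" "\<forall>n. \<sigma> n \<in> {k. \<not> (S xs - xs) \<bullet> (x k - xs) \<le> \<epsilon>}" by blast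
  then have \<sigma>: "strict_mono \<sigma>" "\<And>n. (S xs - xs) \<bullet> (x (\<sigma> n) - xs) > \<epsilon>" by (auto simp: not_le)
  have "bounded (range (x \<circ> \<sigma>))" using x_bounded by (rule bounded_subset) auto
  then obtain p \<rho> where \<rho>: "strict_mono (\<rho> :: nat \<Rightarrow> nat)" "(x \<circ> \<sigma> \<circ> \<rho>) \<longlonglongrightarrow> p"
    using bounded_imp_convergent_subsequence by blast
  have lim: "(\<lambda>n. x ((\<sigma> \<circ> \<rho>) n)) \<longlonglongrightarrow> p" using \<rho>(2) by (simp add: comp_def)
  have "p \<in> Omega" by (rule limit_point_in_Omega[OF strict_mono_o[OF \<sigma>(1) \<rho>(1)] lim])
  then have "(xs - S xs) \<bullet> (p - xs) \<ge> 0" using xs by (simp add: vi_solutions_def)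
  moreover have "(S xs - xs) \<bullet> (p - xs) \<ge> \<epsilon>"
  proof (rule LIMSEQ_le_const)
    show "(\<lambda>n. (S xs - xs) \<bullet> (x ((\<sigma> \<circ> \<rho>) n) - xs)) \<longlonglongrightarrow> (S xs - xs) \<bullet> (p - xs)"
      by (intro tendsto_intros lim)
    show "\<exists>N. \<forall>n\<ge>N. \<epsilon> \<le> (S xs - xs) \<bullet> (x ((\<sigma> \<circ> \<rho>) n) - xs)"
      using \<sigma>(2) by (auto simp: less_imp_le)
  qed
  moreover have "(S xs - xs) \<bullet> (p - xs) = - ((xs - S xs) \<bullet> (p - xs))" by (simp add: inner_diff_left)
  ultimately show False using \<open>\<epsilon> > 0\<close> by linarith
qed

lemma inner_T_residual_le_infdist:
  assumes "xs \<in> Omega"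
  shows "(T xs - xs) \<bullet> (v - xs) \<le> norm (T xs - xs) * infdist v (Fix W)"
proof -
  have F: "closed (Fix W)" "Fix W \<noteq> {}"
    using closed_Fix_nonexpansive[OF W_nonexpansive] Fix_W_nonempty by auto
  define q where "q = closest_point (Fix W) v"
  have "q \<in> Fix W" unfolding q_def by (rule closest_point_in_set[OF F])
  then have "(T xs - xs) \<bullet> (q - xs) \<le> 0"
    using assms by (simp add: vi_solutions_def inner_diff_left)
  moreover have "(T xs - xs) \<bullet> (v - q) \<le> norm (T xs - xs) * norm (v - q)"
    by (rule norm_cauchy_schwarz)
  moreover have "norm (v - q) = infdist v (Fix W)"
    unfolding q_def infdist_eq_setdist setdist_closest_point[OF F] by (simp add: dist_norm)
  moreover have "(T xs - xs) \<bullet> (v - xs) = (T xs - xs) \<bullet> (q - xs) + (T xs - xs) \<bullet> (v - q)"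
    by (simp add: inner_diff_right)
  ultimately show ?thesis by simp
qed

lemma dist_sq_recursion:
  assumes xs: "xs \<in> Omega"
  shows "(norm (x (Suc k) - xs))\<^sup>2 \<le> (1 - \<alpha> k * (1 - r)) * (norm (x k - xs))\<^sup>2
    + 2 * (\<alpha> k * ((S xs - xs) \<bullet> (x (Suc k) - xs))
      + (1 - \<alpha> k) * \<beta> k * (norm (T xs - xs) * infdist (x (Suc k)) (Fix W)))"
proof -
  define a c1 c2 where "a = \<alpha> k" "c1 = (1 - \<alpha> k) * \<beta> k" "c2 = (1 - \<alpha> k) * (1 - \<beta> k)"
  define X A where "X = x k" "A = x (Suc k) - xs"
  define U where "U = a *\<^sub>R (S X - S xs) + c1 *\<^sub>R (T X - T xs) + c2 *\<^sub>R (W X - W xs)"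
  have a: "0 < a" "a < 1" "c1 \<ge> 0" "c2 \<ge> 0"
    using \<alpha>_range[of k] \<beta>_range[of k] by (auto simp: a_c1_c2_def)
  have q: "0 \<le> 1 - a * (1 - r)" "1 - a * (1 - r) \<le> 1"
    using a r_range by (auto simp: mult_le_one)
  have "W xs = xs" using xs vi_solutions_subset by (auto simp: Fix_def)
  then have "A = U + a *\<^sub>R (S xs - xs) + c1 *\<^sub>R (T xs - xs)"
    unfolding X_A_def U_def iter[of k] a_c1_c2_def by (simp add: algebra_simps)
  then have "A \<bullet> A = U \<bullet> A + a * ((S xs - xs) \<bullet> A) + c1 * ((T xs - xs) \<bullet> A)"
    by (metis inner_add_left inner_scaleR_left)
  moreover have "U \<bullet> A \<le> (1 - a * (1 - r)) * norm (X - xs) * norm A"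
  proof -
    have "norm U \<le> (1 - a * (1 - r)) * norm (X - xs)"
      unfolding U_def using a by (intro combination_diff_le) (auto simp: a_c1_c2_def algebra_simps)
    then show ?thesis
      using norm_cauchy_schwarz[of U A] by (meson mult_right_mono norm_ge_zero order.trans)
  qed
  moreover have "c1 * ((T xs - xs) \<bullet> A) \<le> c1 * (norm (T xs - xs) * infdist (x (Suc k)) (Fix W))"
    using inner_T_residual_le_infdist[OF xs] a by (simp add: X_A_def mult_left_mono)
  ultimately have "(norm A)\<^sup>2 \<le> (1 - a * (1 - r)) * norm (X - xs) * norm A
      + (a * ((S xs - xs) \<bullet> A) + c1 * (norm (T xs - xs) * infdist (x (Suc k)) (Fix W)))"
    by (simp add: power2_norm_eq_inner)
  from sq_le_of_mixed_bound[OF q this] show ?thesis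
    by (simp add: X_A_def a_c1_c2_def)
qed

lemma iter_tendsto_if_vi_solution:
  assumes xs_sol: "xs \<in> vi_solutions (\<lambda>z. z - S z) Omega"
  shows "x \<longlonglongrightarrow> xs"
proof -
  have xs: "xs \<in> Omega" using xs_sol vi_solutions_subset by blast
  obtain C where "C \<ge> 0" and C: "eventually (\<lambda>k. infdist (x (Suc k)) (Fix W) \<le> C * \<alpha> k) sequentially"
    using infdist_Fix_le by blast
  define c G where "c = 1 - r" "G = norm (T xs - xs)"
  have c: "0 < c" "c \<le> 1" using r_range by (auto simp: c_G_def)
  define E where "E k = (S xs - xs) \<bullet> (x (Suc k) - xs)" for k
  define s \<gamma> \<delta> where "s k = (norm (x k - xs))\<^sup>2" "\<gamma> k = \<alpha> k * c"
    "\<delta> k = 2 * (E k + \<beta> k * G * C) / c" for k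
  have \<gamma>_range: "0 \<le> \<gamma> k \<and> \<gamma> k \<le> 1" for k
    using \<alpha>_range[of k] c mult_le_one[of "\<alpha> k" c] by (auto simp: s_\<gamma>_\<delta>_def)
  have \<gamma>_not_summable: "\<not> summable \<gamma>"
    using \<alpha>_not_summable summable_mult[of \<gamma> "1 / c"] c by (auto simp: s_\<gamma>_\<delta>_def)
  have recursion: "eventually (\<lambda>k. s (Suc k) \<le> (1 - \<gamma> k) * s k + \<gamma> k * \<delta> k) sequentially"
    using C
  proof eventually_elim
    case (elim k)
    have ab: "0 < \<alpha> k" "\<alpha> k < 1" "0 < \<beta> k" using \<alpha>_range[of k] \<beta>_range[of k] by auto
    have "(1 - \<alpha> k) * \<beta> k * (G * infdist (x (Suc k)) (Fix W)) \<le> \<beta> k * (G * (C * \<alpha> k))"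
      using elim ab by (intro mult_mono mult_left_mono) (auto simp: c_G_def infdist_nonneg)
    moreover have "\<gamma> k * \<delta> k = 2 * (\<alpha> k * E k + \<beta> k * (G * (C * \<alpha> k)))"
      using c by (simp add: s_\<gamma>_\<delta>_def field_simps)
    ultimately show ?case
      using dist_sq_recursion[OF xs, of k] by (simp add: s_\<gamma>_\<delta>_def c_G_def E_def)
  qed
  have \<delta>_small: "eventually (\<lambda>k. \<delta> k \<le> \<epsilon>) sequentially" if "\<epsilon> > 0" for \<epsilon>
  proof -
    have "(\<lambda>k. \<beta> k * G * C) \<longlonglongrightarrow> 0 * G * C" by (intro tendsto_intros \<beta>_lim)
    then have "eventually (\<lambda>k. \<beta> k * G * C < c * \<epsilon> / 4) sequentially"
      using c that by (intro order_tendstoD(2)) auto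
    moreover have "eventually (\<lambda>k. E k \<le> c * \<epsilon> / 4) sequentially"
      unfolding E_def eventually_sequentially_Suc[of "\<lambda>k. (S xs - xs) \<bullet> (x k - xs) \<le> c * \<epsilon> / 4"]
      by (rule eventually_inner_le[OF xs_sol]) (use c that in simp)
    ultimately show ?thesis
      by eventually_elim (use c in \<open>simp add: s_\<gamma>_\<delta>_def pos_divide_le_eq mult.commute\<close>)
  qed
  have "s \<longlonglongrightarrow> 0"
    by (rule Xu_lemma[OF _ \<gamma>_range \<gamma>_not_summable recursion \<delta>_small]) (simp add: s_\<gamma>_\<delta>_def)
  then have "(\<lambda>k. sqrt (s k)) \<longlonglongrightarrow> sqrt 0" by (intro tendsto_intros)
  then have "(\<lambda>k. x k - xs) \<longlonglongrightarrow> 0" by (simp add: s_\<gamma>_\<delta>_def tendsto_norm_zero_iff)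
  then show ?thesis using Lim_null by blast
qed

theorem iter_tendsto_vi_solution:
  "\<exists>xs. vi_solutions (\<lambda>z. z - S z) Omega = {xs} \<and> x \<longlonglongrightarrow> xs"
proof -
  have "closed Omega" "convex Omega"
    using closed_vi_solutions_nonexpansive[OF T_nonexpansive closed_Fix_nonexpansive convex_Fix_nonexpansive]
      convex_vi_solutions_nonexpansive[OF T_nonexpansive convex_Fix_nonexpansive] W_nonexpansive
    by auto
  then obtain xs where "vi_solutions (\<lambda>z. z - S z) Omega = {xs}"
    using vi_solutions_contraction_singleton[OF S_contraction _ _ Omega_nonempty] by blast
  moreover from this have "x \<longlonglongrightarrow> xs" by (intro iter_tendsto_if_vi_solution) simp
  ultimately show ?thesis by blast
qed

end

theorem mainTheorem9:
  fixes f1 f2 \<omega> :: "'a::euclidean_space \<Rightarrow> real"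
    and gf1 gf2 g\<omega> :: "'a \<Rightarrow> 'a"
    and g1 g2 :: "'a \<Rightarrow> ereal"
    and Lf1 Lf2 L\<omega> \<mu> u t s :: real
    and \<alpha> \<beta> :: "nat \<Rightarrow> real"
    and x :: "nat \<Rightarrow> 'a"
  assumes f1_convex: "convex_on UNIV f1" and f2_convex: "convex_on UNIV f2"
    and grad_f1: "is_gradient f1 gf1" and grad_f2: "is_gradient f2 gf2"
    and Lf1_pos: "Lf1 > 0" and Lf2_pos: "Lf2 > 0"
    and lip_f1: "Lf1-lipschitz_on UNIV gf1" and lip_f2: "Lf2-lipschitz_on UNIV gf2"
    and g1_proper: "proper_fun g1" and g1_lsc: "lsc_fun g1" and g1_convex: "convex_fun g1"
    and g2_proper: "proper_fun g2" and g2_lsc: "lsc_fun g2" and g2_convex: "convex_fun g2"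
    and \<mu>_pos: "\<mu> > 0" and \<omega>_sc: "strongly_convex \<mu> \<omega>"
    and grad_\<omega>: "is_gradient \<omega> g\<omega>" and L\<omega>_pos: "L\<omega> > 0"
    and lip_\<omega>: "L\<omega>-lipschitz_on UNIV g\<omega>"
    and Ystar_ne: "{y. \<forall>z. ereal (f2 y) + g2 y \<le> ereal (f2 z) + g2 z} \<noteq> {}"
    and Xstar_ne: "{y \<in> {y. \<forall>z. ereal (f2 y) + g2 y \<le> ereal (f2 z) + g2 z}.
                     \<forall>z \<in> {y. \<forall>z. ereal (f2 y) + g2 y \<le> ereal (f2 z) + g2 z}.
                       ereal (f1 y) + g1 y \<le> ereal (f1 z) + g1 z} \<noteq> {}"
    and u_range: "0 < u" "u \<le> 2 / (L\<omega> + \<mu>)"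
    and t_range: "0 < t" "t \<le> 1 / Lf1"
    and s_range: "0 < s" "s \<le> 1 / Lf2"
    and \<alpha>_range: "\<And>k. 0 < \<alpha> k \<and> \<alpha> k < 1"
    and \<beta>_range: "\<And>k. 0 < \<beta> k \<and> \<beta> k < 1"
    and iter: "\<And>k. x (Suc k) =
        \<alpha> k *\<^sub>R (x k - u *\<^sub>R g\<omega> (x k))
      + ((1 - \<alpha> k) * \<beta> k) *\<^sub>R fb_step t g1 gf1 (x k)
      + ((1 - \<alpha> k) * (1 - \<beta> k)) *\<^sub>R fb_step s g2 gf2 (x k)"
    and Omega_ne: "{z \<in> Fix (fb_step s g2 gf2). \<forall>y \<in> Fix (fb_step s g2 gf2).
                     (z - fb_step t g1 gf1 z) \<bullet> (y - z) \<ge> 0} \<noteq> {}"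
    and ratio_lim: "filterlim (\<lambda>k. \<beta> k / \<alpha> k) at_top sequentially"
    and \<beta>_lim: "\<beta> \<longlonglongrightarrow> 0" and \<alpha>_lim: "\<alpha> \<longlonglongrightarrow> 0"
    and \<alpha>_not_summable: "\<not> summable \<alpha>"
    and K_bound: "\<exists>K>0. limsup (\<lambda>k. ereal (1 / \<alpha> (Suc k) * \<bar>1 / \<beta> (Suc k) - 1 / \<beta> k\<bar>)) \<le> ereal K"
    and diff_cond: "limsup (\<lambda>k. ereal ((\<bar>\<beta> (Suc k) - \<beta> k\<bar> + \<bar>\<alpha> (Suc k) - \<alpha> k\<bar>)
                        / (\<alpha> (Suc k) * \<beta> (Suc k)))) = 0"
    and x_bounded: "bounded (range x)"
    and A1: "limsup (\<lambda>k. ereal (infdist (x (Suc k)) (Fix (fb_step s g2 gf2)) / \<alpha> k)) < \<infinity>"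
  shows "\<exists>xs. xs \<in> {z \<in> Fix (fb_step s g2 gf2). \<forall>y \<in> Fix (fb_step s g2 gf2).
                     (z - fb_step t g1 gf1 z) \<bullet> (y - z) \<ge> 0}
           \<and> (\<forall>z \<in> {z \<in> Fix (fb_step s g2 gf2). \<forall>y \<in> Fix (fb_step s g2 gf2).
                     (z - fb_step t g1 gf1 z) \<bullet> (y - z) \<ge> 0}.
                 (xs - (xs - u *\<^sub>R g\<omega> xs)) \<bullet> (z - xs) \<ge> 0)
           \<and> (\<forall>w. w \<in> {z \<in> Fix (fb_step s g2 gf2). \<forall>y \<in> Fix (fb_step s g2 gf2).
                     (z - fb_step t g1 gf1 z) \<bullet> (y - z) \<ge> 0}
                 \<and> (\<forall>z \<in> {z \<in> Fix (fb_step s g2 gf2). \<forall>y \<in> Fix (fb_step s g2 gf2).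
                     (z - fb_step t g1 gf1 z) \<bullet> (y - z) \<ge> 0}.
                       (w - (w - u *\<^sub>R g\<omega> w)) \<bullet> (z - w) \<ge> 0) \<longrightarrow> w = xs)
           \<and> x \<longlonglongrightarrow> xs"
proof -
  define S T W where "S = (\<lambda>x. x - u *\<^sub>R g\<omega> x)" "T = fb_step t g1 gf1" "W = fb_step s g2 gf2"
  obtain r where S: "contraction r S"
    using gradient_step_contraction[OF \<omega>_sc \<mu>_pos grad_\<omega> lip_\<omega> L\<omega>_pos u_range]
    unfolding S_T_W_def by blast
  have T: "nonexpansive T"
    unfolding S_T_W_def
    by (rule fb_step_nonexpansive[OF f1_convex grad_f1 lip_f1 Lf1_pos g1_lsc g1_proper g1_convex t_range])
  have W: "nonexpansive W"
    unfolding S_T_W_def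
    by (rule fb_step_nonexpansive[OF f2_convex grad_f2 lip_f2 Lf2_pos g2_lsc g2_proper g2_convex s_range])
  interpret trilevel_iteration_convergence S T W r \<alpha> \<beta> x
    using S T W \<alpha>_range \<beta>_range iter x_bounded Omega_ne ratio_lim \<beta>_lim \<alpha>_lim \<alpha>_not_summable
      K_bound diff_cond A1
    by unfold_locales (simp_all add: S_T_W_def vi_solutions_def)
  obtain xs where "vi_solutions (\<lambda>z. z - S z) Omega = {xs}" "x \<longlonglongrightarrow> xs"
    using iter_tendsto_vi_solution by blast
  then show ?thesis
    unfolding vi_solutions_def S_T_W_def by blast
qed

end
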